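(* Let $\kappa=[2\ell]$ for some $\ell\in\mathbb Z$, let $t=F+\check E+\kappa K^{-1}\in\mathbf U$, and define for $a\ge0$ $$\dot t^{(2a)}=\frac{1}{[2a]!}\prod_{j=-a+1}^{a}\bigl(t-[2j-1]\bigr),\qquad \dot t^{(2a+1)}=\frac{t}{[2a+1]!}\prod_{j=-a+1}^{a}\bigl(t-[2j-1]\bigr).$$ Then for every $m\ge 0$, in $\mathbf U$, $$\dot t^{(2m)}=\sum_{b=0}^{2m}\sum_{a=0}^{b}\sum_{c\ge0} q^{\binom{2c}{2}-b(2m-b-2c)-a(b-a)}\,p^{(2m-b-2c)}(\kappa)\;\check E^{(a)}\Bigl\{\begin{matrix}h;1-m\\ c\end{matrix}\Bigr\}K^{b-2m+2c}F^{(b-a)},$$ $$\dot t^{(2m+1)}=\sum_{b=0}^{2m+1}\sum_{a=0}^{b}\sum_{c\ge0} q^{\binom{2c}{2}-2c-b(2m-b-2c+1)-a(b-a)}\,p^{(2m-b-2c+1)}(\kappa)\;\check E^{(a)}\Bigl\{\begin{matrix}h;1-m\\ c\end{matrix}\Bigr\}K^{b-2m+2c-1}F^{(b-a)}.$$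
   Context: $q$ is an indeterminate, $[n]=\frac{q^n-q^{-n}}{q-q^{-1}}$ for $n\in\mathbb Z$, $[n]!=[1]\cdots[n]$, $[0]!=1$. $\mathbf U$ is the $\mathbb Q(q)$-algebra generated by $E,F,K^{\pm1}$ with relations $KK^{-1}=K^{-1}K=1$, $EF-FE=\frac{K-K^{-1}}{q-q^{-1}}$, $KE=q^2EK$, $KF=q^{-2}FK$. Put $\check E=q^{-1}EK^{-1}$, $\check E^{(n)}=\check E^n/[n]!$, $F^{(n)}=F^n/[n]!$. For $a\in\mathbb Z$, $n\in\mathbb N$: $\Bigl\{\begin{matrix}h;a\\ n\end{matrix}\Bigr\}=\prod_{i=1}^{n}\frac{q^{4a+4i-4}K^{-2}-q^2}{q^{4i}-1}$ (equal to $1$ for $n=0$). The polynomials $p_n(x)$ are defined by $p_0=1$, $p_n=0$ for $n<0$, $p_{n+1}=x\,p_n+q^{1-2n}[n][n-1]p_{n-1}$ ($n\ge0$); $p^{(n)}=p_n/[n]!$ for $n\ge0$ and $p^{(n)}=0$ for $n<0$. *)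

theory Defs
  imports "HOL-Computational_Algebra.Polynomial" "HOL-Computational_Algebra.Fraction_Field"
begin

type_synonym qf = "rat poly fract"

definition qq :: qf where "qq = Fract [:0, 1:] 1"

definition qint :: "int \<Rightarrow> qf" where
  "qint n = (qq powi n - qq powi (- n)) / (qq - inverse qq)"

definition qfact :: "nat \<Rightarrow> qf" where
  "qfact n = (\<Prod>i\<in>{1..n}. qint (int i))"

fun pp :: "nat \<Rightarrow> qf \<Rightarrow> qf" where
  "pp 0 x = 1"
| "pp (Suc 0) x = x"
| "pp (Suc (Suc n)) x = x * pp (Suc n) x
      + qq powi (1 - 2 * (int n + 1)) * qint (int n + 1) * qint (int n) * pp n x"

definition pdiv :: "int \<Rightarrow> qf \<Rightarrow> qf" where
  "pdiv n x = (if n < 0 then 0 else pp (nat n) x / qfact (nat n))"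

text \<open>A representation of the defining presentation of U in a ring A:
  phi makes A a Q(q)-algebra (a unital ring homomorphism into the centre of A),
  and E, F, K, Ki satisfy the defining relations of U (Ki playing the role of K^-1).
  Since U is the Q(q)-algebra given by these generators and relations, an identity
  in the generators holds in U iff it holds for every such datum.\<close>
definition U_rep :: "(qf \<Rightarrow> 'a::ring_1) \<Rightarrow> 'a \<Rightarrow> 'a \<Rightarrow> 'a \<Rightarrow> 'a \<Rightarrow> bool" where
  "U_rep phi E F K Ki \<longleftrightarrow>
     (\<forall>x y. phi (x + y) = phi x + phi y) \<and>
     (\<forall>x y. phi (x * y) = phi x * phi y) \<and>
     phi 1 = 1 \<and>
     (\<forall>x z. phi x * z = z * phi x) \<and>
     K * Ki = 1 \<and> Ki * K = 1 \<and>
     E * F - F * E = phi (inverse (qq - inverse qq)) * (K - Ki) \<and>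
     K * E = phi (qq ^ 2) * E * K \<and>
     K * F = phi (inverse (qq ^ 2)) * F * K"

definition Kpow :: "'a::ring_1 \<Rightarrow> 'a \<Rightarrow> int \<Rightarrow> 'a" where
  "Kpow K Ki z = (if 0 \<le> z then K ^ nat z else Ki ^ nat (- z))"

definition Echeck :: "(qf \<Rightarrow> 'a::ring_1) \<Rightarrow> 'a \<Rightarrow> 'a \<Rightarrow> 'a" where
  "Echeck phi E Ki = phi (inverse qq) * E * Ki"

definition dpow :: "(qf \<Rightarrow> 'a::ring_1) \<Rightarrow> 'a \<Rightarrow> nat \<Rightarrow> 'a" where
  "dpow phi X n = phi (inverse (qfact n)) * X ^ n"

fun hbin :: "(qf \<Rightarrow> 'a::ring_1) \<Rightarrow> 'a \<Rightarrow> int \<Rightarrow> nat \<Rightarrow> 'a" where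
  "hbin phi Ki a 0 = 1"
| "hbin phi Ki a (Suc n) = hbin phi Ki a n *
     (phi (inverse (qq ^ (4 * Suc n) - 1)) *
      (phi (qq powi (4 * a + 4 * int (Suc n) - 4)) * Ki ^ 2 - phi (qq ^ 2)))"

definition tel :: "(qf \<Rightarrow> 'a::ring_1) \<Rightarrow> 'a \<Rightarrow> 'a \<Rightarrow> 'a \<Rightarrow> qf \<Rightarrow> 'a" where
  "tel phi E F Ki kappa = F + Echeck phi E Ki + phi kappa * Ki"

definition tprod :: "(qf \<Rightarrow> 'a::ring_1) \<Rightarrow> 'a \<Rightarrow> nat \<Rightarrow> 'a" where
  "tprod phi t a = prod_list (map (\<lambda>j. t - phi (qint (2 * j - 1))) [- int a + 1 .. int a])"

definition tdot_even :: "(qf \<Rightarrow> 'a::ring_1) \<Rightarrow> 'a \<Rightarrow> nat \<Rightarrow> 'a" where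
  "tdot_even phi t a = phi (inverse (qfact (2 * a))) * tprod phi t a"

definition tdot_odd :: "(qf \<Rightarrow> 'a::ring_1) \<Rightarrow> 'a \<Rightarrow> nat \<Rightarrow> 'a" where
  "tdot_odd phi t a = phi (inverse (qfact (2 * a + 1))) * (t * tprod phi t a)"

end

theory Submission
  imports Defs "HOL-Library.Groups_Big_Fun" "HOL-Library.Product_Plus"
begin

text \<open>Left multiplication by \<open>t = F + Echeck + \<kappa> K^-1\<close> maps the products
  \<open>Echeck^(a) {h;\<mu> over c} K^e F^(d)\<close> to explicit combinations of such products: \<open>Echeck\<close>
  and \<open>K^-1\<close> act directly, \<open>F\<close> passes \<open>Echeck^(a)\<close> at the cost of terms in \<open>K^-1\<close>, and passes
  \<open>{h;\<mu> over c}\<close> by lowering \<open>\<mu>\<close>, which a Pascal-type rule undoes; finally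
  \<open>K^-2 {h;\<mu> over c}\<close> is traded for \<open>{h;\<mu> over c+1}\<close>. Once \<open>e\<close> is tied to the degree
  \<open>a + d + 2c\<close>, multiplication by \<open>t\<close> is a finite shift operator on coefficient families
  indexed by \<open>\<int>\<^sup>3\<close>. The divided powers satisfy
  \<open>t t^(2m) = [2m+1] t^(2m+1)\<close> and \<open>t t^(2m+1) = [2m+2] t^(2m+2) + [2m+1] t^(2m)\<close>, so by induction
  on \<open>m\<close> it suffices that the claimed coefficient families obey the same recursions. Pointwise,
  after eliminating \<open>p^(n)\<close> by its three-term recurrence, these are identities between
  Laurent polynomials in \<open>q\<close>.\<close>

section \<open>Integer powers of q and quantum integers\<close>

lemma qq_power: "qq ^ k = Fract ([:0, 1:] ^ k) 1"
  by (induction k) (simp_all add: qq_def One_fract_def)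

lemma qq_power_neq_1: "k > 0 \<Longrightarrow> qq ^ k \<noteq> 1"
proof
  assume k: "k > 0" and "qq ^ k = 1"
  then have "[:0, 1:] ^ k = (1 :: rat poly)"
    by (simp add: qq_power One_fract_def eq_fract)
  then have "degree ([:0, 1 :: rat:] ^ k) = 0" by simp
  with k show False by (simp add: degree_power_eq)
qed

lemma qq_nonzero [simp]: "qq \<noteq> 0"
  by (simp add: qq_def eq_fract Zero_fract_def)

definition qpow :: "int \<Rightarrow> qf" where "qpow n = qq powi n"

lemma qpow_0 [simp]: "qpow 0 = 1" by (simp add: qpow_def)
lemma qpow_1: "qpow 1 = qq" by (simp add: qpow_def)
lemma qpow_nonzero [simp]: "qpow n \<noteq> 0" by (simp add: qpow_def)
lemma qpow_add: "qpow (m + n) = qpow m * qpow n" by (simp add: qpow_def power_int_add)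
lemma qpow_diff: "qpow (m - n) = qpow m / qpow n" by (simp add: qpow_def power_int_diff)
lemma qpow_minus: "qpow (- n) = inverse (qpow n)" by (simp add: qpow_def power_int_minus)
lemma qpow_of_nat: "qpow (int n) = qq ^ n" by (simp add: qpow_def)
lemma qpow_numeral: "qpow (numeral k) = qq ^ numeral k" by (simp add: qpow_def)
lemma qpow_mult_numeral: "qpow (n * numeral k) = qpow n ^ numeral k"
  by (simp add: qpow_def power_int_mult)
lemma qpow_mult_mult_numeral: "qpow (m * (n * numeral k)) = qpow (m * n) ^ numeral k"
  by (simp add: qpow_mult_numeral mult.assoc[symmetric])
lemma qpow_numeral_mult: "qpow (numeral k * n) = qpow n ^ numeral k"
  by (simp add: qpow_mult_numeral mult.commute)

lemma qpow_eq_1_iff: "qpow n = 1 \<longleftrightarrow> n = 0"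
proof
  assume h: "qpow n = 1"
  show "n = 0"
  proof (rule ccontr)
    assume "n \<noteq> 0"
    then consider k where "k > 0" "n = int k" | k where "k > 0" "n = - int k"
      by (metis neg_int_cases nonneg_int_cases not_gr0 not_le of_nat_0)
    then show False
      by cases (use h qq_power_neq_1 in \<open>auto simp: qpow_of_nat qpow_minus\<close>)
  qed
qed simp

lemma qpow_eq_iff: "qpow m = qpow n \<longleftrightarrow> m = n"
  using qpow_eq_1_iff[of "m - n"] by (auto simp: qpow_diff)

text \<open>Rewriting with these rules turns an identity between rational expressions in
  powers \<open>q\<^sup>e\<close> with linear exponents \<open>e\<close> into a polynomial identity in the
  powers of the individual variables, which \<open>field_simps\<close> and \<open>algebra\<close> then decide.\<close>
lemmas qpow_split = qpow_add qpow_diff qpow_minus qpow_numeral qpow_1 qpow_mult_numeral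
  qpow_mult_mult_numeral qpow_numeral_mult
  distrib_left distrib_right left_diff_distrib right_diff_distrib
  mult.assoc mult.commute mult.left_commute

definition qdelta :: qf where "qdelta = qq - inverse qq"

lemma qdelta_qpow: "qdelta = qpow 1 - qpow (- 1)"
  by (simp add: qdelta_def qpow_def power_int_minus)

lemma qdelta_nonzero [simp]: "qdelta \<noteq> 0"
  using qpow_eq_iff[of 1 "- 1"] by (simp add: qdelta_qpow)

lemma qint_qpow: "qint n = (qpow n - qpow (- n)) / qdelta"
  by (simp add: qint_def qdelta_def qpow_def)

lemma qint_0 [simp]: "qint 0 = 0"
  by (simp add: qint_def)

lemma qint_1 [simp]: "qint 1 = 1"
  by (simp add: qint_qpow qdelta_qpow[symmetric])

lemma qint_nonzero: "n \<noteq> 0 \<Longrightarrow> qint n \<noteq> 0"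
  by (simp add: qint_qpow qpow_eq_iff)

lemma qint_uminus: "qint (- n) = - qint n"
  by (simp add: qint_qpow minus_divide_left)

lemma qfact_Suc: "qfact (Suc n) = qfact n * qint (int (Suc n))"
  by (simp add: qfact_def)

lemma qfact_nonzero [simp]: "qfact n \<noteq> 0"
  by (induction n) (simp_all add: qfact_Suc qint_nonzero, simp add: qfact_def)

lemma pdiv_recurrence:
  "qint (n + 1) * pdiv (n + 1) x = x * pdiv n x + qpow (1 - 2 * n) * qint (n - 1) * pdiv (n - 1) x"
proof (cases "n \<le> 0")
  case True
  then consider "n < -1" | "n = -1" | "n = 0" by linarith
  then show ?thesis by cases (simp_all add: pdiv_def qfact_def)
next
  case False
  define k where "k = nat (n - 1)"
  have n: "n = int k + 1" using False by (simp add: k_def)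
  have pdiv: "pdiv (n + 1) x = pp (Suc (Suc k)) x / qfact (Suc (Suc k))"
    "pdiv n x = pp (Suc k) x / qfact (Suc k)" "pdiv (n - 1) x = pp k x / qfact k"
    by (simp_all add: pdiv_def n nat_add_distrib)
  have int_eq: "qint (n + 1) = qint (int (Suc (Suc k)))" "qint (n - 1) = qint (int k)"
    "qpow (1 - 2 * n) = qq powi (1 - 2 * (int k + 1))"
    by (simp_all add: n qpow_def add_ac)
  have "qint (int (Suc (Suc k))) \<noteq> 0" "qint (int (Suc k)) \<noteq> 0"
    by (simp_all add: qint_nonzero)
  then show ?thesis
    unfolding pdiv int_eq
    by (simp only: pp.simps qfact_Suc[of "Suc k"] qfact_Suc[of k]) (simp add: n field_simps)
qed

section \<open>Relations in a representation of \<open>U\<close>\<close>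

locale Uq_rep =
  fixes phi :: "qf \<Rightarrow> 'a::ring_1" and E F K Ki :: 'a
  assumes U_rep: "U_rep phi E F K Ki"
begin

lemma phi_add: "phi (x + y) = phi x + phi y" using U_rep unfolding U_rep_def by blast
lemma phi_mult: "phi (x * y) = phi x * phi y" using U_rep unfolding U_rep_def by blast
lemma phi_1 [simp]: "phi 1 = 1" using U_rep unfolding U_rep_def by blast
lemma phi_commute: "phi x * z = z * phi x" using U_rep unfolding U_rep_def by blast
lemma K_Ki [simp]: "K * Ki = 1" using U_rep unfolding U_rep_def by blast
lemma Ki_K [simp]: "Ki * K = 1" using U_rep unfolding U_rep_def by blast

lemma phi_0 [simp]: "phi 0 = 0"
  using phi_add[of 0 0] by simp

lemma phi_uminus: "phi (- x) = - phi x"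
  using phi_add[of "- x" x] by (simp add: eq_neg_iff_add_eq_0)

lemma phi_diff: "phi (x - y) = phi x - phi y"
  using phi_add[of x "- y"] by (simp add: phi_uminus)

definition smul :: "qf \<Rightarrow> 'a \<Rightarrow> 'a" where "smul s z = phi s * z"

lemma smul_mult_left [simp]: "smul s z * w = smul s (z * w)"
  by (simp add: smul_def mult.assoc)
lemma smul_mult_right [simp]: "z * smul s w = smul s (z * w)"
  by (simp add: smul_def mult.assoc[symmetric] phi_commute[of s z, symmetric])
lemma smul_smul [simp]: "smul s (smul t z) = smul (s * t) z"
  by (simp add: smul_def phi_mult mult.assoc)
lemma smul_zero [simp]: "smul 0 z = 0" "smul s 0 = 0" by (simp_all add: smul_def)
lemma smul_one [simp]: "smul 1 z = z" by (simp add: smul_def)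
lemma smul_add: "smul s (z + w) = smul s z + smul s w" by (simp add: smul_def distrib_left)
lemma smul_diff: "smul s (z - w) = smul s z - smul s w" by (simp add: smul_def right_diff_distrib)
lemma smul_add_left: "smul (s + t) z = smul s z + smul t z"
  by (simp add: smul_def phi_add distrib_right)
lemma smul_diff_left: "smul (s - t) z = smul s z - smul t z"
  by (simp add: smul_def phi_diff left_diff_distrib)
lemma smul_uminus_left: "smul (- s) z = - smul s z" by (simp add: smul_def phi_uminus)
lemma phi_eq_smul: "phi s = smul s 1" by (simp add: smul_def)

lemma smul_cancel: "s \<noteq> 0 \<Longrightarrow> smul s z = smul s w \<Longrightarrow> z = w"
  by (metis smul_smul left_inverse smul_one)

lemma smul_solve:
  assumes "b \<noteq> 0" and "X = smul a Y - smul b Z"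
  shows "Z = smul (a / b) Y - smul (inverse b) X"
proof -
  have "Z = smul (inverse b) (smul b Z)" using assms(1) by simp
  also have "smul b Z = smul a Y - X" using assms(2) by simp
  finally show ?thesis by (simp add: smul_diff divide_inverse mult.commute)
qed


lemma K_E: "K * E = smul (qpow 2) (E * K)"
  using U_rep by (simp add: U_rep_def smul_def qpow_numeral mult.assoc)

lemma K_F: "K * F = smul (qpow (- 2)) (F * K)"
  using U_rep by (simp add: U_rep_def smul_def qpow_minus qpow_numeral mult.assoc)

lemma F_K: "F * K = smul (qpow 2) (K * F)"
  by (simp add: K_F qpow_minus)

lemma Ki_E: "Ki * E = smul (qpow (- 2)) (E * Ki)"
proof -
  have "Ki * E = Ki * (smul (qpow (- 2)) (K * E)) * Ki"
    by (simp add: K_E qpow_minus mult.assoc)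
  then show ?thesis by (simp add: mult.assoc[symmetric])
qed

lemma F_Ki: "F * Ki = smul (qpow (- 2)) (Ki * F)"
proof -
  have "Ki * F = Ki * (F * K) * Ki" by (simp add: mult.assoc)
  also have "\<dots> = smul (qpow 2) (F * Ki)" by (simp add: F_K mult.assoc[symmetric])
  finally show ?thesis by (simp add: qpow_minus)
qed

lemma F_Ki2: "F * (Ki * Ki) = smul (qpow (- 4)) (Ki * Ki * F)"
proof -
  have "F * (Ki * Ki) = smul (qpow (- 2) * qpow (- 2)) (Ki * Ki * F)"
    by (simp add: mult.assoc[symmetric] F_Ki) (simp add: mult.assoc F_Ki)
  then show ?thesis by (simp add: qpow_add[symmetric])
qed

abbreviation Ech :: 'a where "Ech \<equiv> Echeck phi E Ki"

lemma Echeck_eq: "Ech = smul (qpow (- 1)) (E * Ki)"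
  by (simp add: Echeck_def smul_def qpow_minus qpow_1 mult.assoc)

lemma Ki_Echeck: "Ki * Ech = smul (qpow (- 2)) (Ech * Ki)"
  by (simp add: Echeck_eq mult.assoc[symmetric] Ki_E mult.commute)

lemma Ki2_Echeck: "Ki * Ki * Ech = smul (qpow (- 4)) (Ech * Ki * Ki)"
proof -
  have "Ki * Ki * Ech = smul (qpow (- 2) * qpow (- 2)) (Ech * Ki * Ki)"
    by (simp add: mult.assoc Ki_Echeck) (simp add: mult.assoc[symmetric] Ki_Echeck)
  then show ?thesis by (simp add: qpow_add[symmetric])
qed

lemma F_Echeck: "F * Ech = smul (qpow (- 2)) (Ech * F) - smul (qpow (- 1) / qdelta) (1 - Ki * Ki)"
proof -
  have "E * F - F * E = smul (inverse qdelta) (K - Ki)"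
    using U_rep by (simp add: U_rep_def smul_def qdelta_def)
  then have F_E: "F * E = E * F - smul (inverse qdelta) (K - Ki)" by (simp add: algebra_simps)
  have "F * Ech = smul (qpow (- 1)) (F * E * Ki)" by (simp add: Echeck_eq mult.assoc)
  also have "\<dots> = smul (qpow (- 1)) (E * (F * Ki)) - smul (qpow (- 1) / qdelta) (1 - Ki * Ki)"
    by (simp add: F_E left_diff_distrib smul_diff mult.assoc divide_inverse)
  also have "\<dots> = smul (qpow (- 2)) (Ech * F) - smul (qpow (- 1) / qdelta) (1 - Ki * Ki)"
    by (simp add: F_Ki Echeck_eq mult.assoc[symmetric] qpow_add[symmetric])
  finally show ?thesis .
qed

abbreviation KP :: "int \<Rightarrow> 'a" where "KP \<equiv> Kpow K Ki"

lemma Kpow_0 [simp]: "KP 0 = 1" by (simp add: Kpow_def)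

lemma Kpow_succ: "KP (z + 1) = K * KP z"
proof (cases "z \<ge> 0")
  case True
  then have "nat (z + 1) = Suc (nat z)" by simp
  with True show ?thesis by (simp add: Kpow_def)
next
  case False
  then have "nat (- z) = Suc (nat (- z - 1))" by simp
  moreover have "K * Ki ^ Suc n = Ki ^ n" for n
    by (simp add: mult.assoc[symmetric] power_Suc)
  ultimately show ?thesis using False by (simp add: Kpow_def)
qed

lemma Kpow_pred: "KP (z - 1) = Ki * KP z"
  using arg_cong[OF Kpow_succ[of "z - 1"], of "(*) Ki"] by (simp add: mult.assoc[symmetric])

lemma Ki2_Kpow: "Ki * Ki * KP e = KP (e - 2)"
  using Kpow_pred[of e] Kpow_pred[of "e - 1"] by (simp add: mult.assoc)

lemma F_Kpow: "F * KP e = smul (qpow (2 * e)) (KP e * F)"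
proof (induction e rule: int_induct[where k = 0])
  case base
  then show ?case by simp
next
  case (step1 i)
  have "F * KP (i + 1) = smul (qpow 2 * qpow (2 * i)) (K * KP i * F)"
    by (simp add: Kpow_succ mult.assoc[symmetric] F_K) (simp add: mult.assoc step1)
  moreover have "qpow 2 * qpow (2 * i) = qpow (2 * (i + 1))"
    by (simp add: qpow_add[symmetric] algebra_simps)
  ultimately show ?case by (simp add: Kpow_succ mult.assoc)
next
  case (step2 i)
  have "F * KP (i - 1) = smul (qpow (- 2) * qpow (2 * i)) (Ki * KP i * F)"
    by (simp add: Kpow_pred mult.assoc[symmetric] F_Ki) (simp add: mult.assoc step2)
  moreover have "qpow (- 2) * qpow (2 * i) = qpow (2 * (i - 1))"
    by (simp add: qpow_add[symmetric] algebra_simps)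
  ultimately show ?case by (simp add: Kpow_pred mult.assoc)
qed

lemma dpow_smul: "dpow phi X n = smul (inverse (qfact n)) (X ^ n)"
  by (simp add: dpow_def smul_def)

lemma dpow_0 [simp]: "dpow phi X 0 = 1"
  by (simp add: dpow_smul qfact_def)

lemma mult_dpow: "X * dpow phi X n = smul (qint (int n + 1)) (dpow phi X (Suc n))"
proof -
  have "qint (int n + 1) * inverse (qfact (Suc n)) = inverse (qfact n)"
    using qint_nonzero[of "int n + 1"] by (simp add: qfact_Suc field_simps add.commute)
  then show ?thesis by (simp add: dpow_smul)
qed

abbreviation dE :: "nat \<Rightarrow> 'a" where "dE \<equiv> dpow phi Ech"
abbreviation dF :: "nat \<Rightarrow> 'a" where "dF \<equiv> dpow phi F"

lemma Ki_dE: "Ki * dE n = smul (qpow (- 2 * int n)) (dE n * Ki)"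
proof -
  have "Ki * Ech ^ n = smul (qpow (- 2 * int n)) (Ech ^ n * Ki)"
  proof (induction n)
    case (Suc n)
    have "Ki * Ech ^ Suc n = smul (qpow (- 2 * int n) * qpow (- 2)) (Ech ^ Suc n * Ki)"
      by (simp only: power_Suc2 mult.assoc[symmetric] Suc smul_mult_left)
        (simp add: mult.assoc Ki_Echeck)
    then show ?case by (simp add: qpow_add[symmetric] algebra_simps)
  qed simp
  then show ?thesis by (simp add: dpow_smul mult.commute)
qed

lemma F_Echeck_power:
  "F * Ech ^ Suc n = smul (qpow (- 2 * int (Suc n))) (Ech ^ Suc n * F)
     - smul (qint (int (Suc n)) / qdelta)
         (Ech ^ n * (smul (qpow (- int (Suc n))) 1 - smul (qpow (2 - 3 * int (Suc n))) (Ki * Ki)))"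
proof (induction n)
  case 0
  show ?case by (simp add: F_Echeck smul_diff)
next
  case (Suc n)
  define \<alpha> where "\<alpha> = qpow (- 2 - 2 * int n) * qpow (- 2)"
  define \<beta> where "\<beta> = qpow (- 2 - 2 * int n) * qpow (- 1) / qdelta + qint (1 + int n) * qpow (- 1 - int n) / qdelta"
  define \<gamma> where "\<gamma> = qpow (- 2 - 2 * int n) * qpow (- 1) / qdelta
    + qint (1 + int n) * (qpow (- 1 - 3 * int n) * qpow (- 4)) / qdelta"
  have pc: "x ^ k * (x * y) = x * (x ^ k * y)" "x ^ k * x = x * x ^ k" for x y :: 'a and k
    by (simp_all add: mult.assoc[symmetric] power_commutes)
  have "F * Ech ^ Suc (Suc n) = (F * Ech ^ Suc n) * Ech" by (simp only: power_Suc2 mult.assoc)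
  also have "\<dots> = smul \<alpha> (Ech * (Ech ^ n * (Ech * F))) - smul \<beta> (Ech * Ech ^ n)
      + smul \<gamma> (Ech * (Ech ^ n * (Ki * Ki)))"
    apply (simp only: Suc.IH left_diff_distrib smul_mult_left mult.assoc smul_diff smul_mult_right)
    apply (simp add: F_Echeck Ki2_Echeck[simplified mult.assoc] smul_diff right_diff_distrib
        mult.assoc pc \<alpha>_def \<beta>_def \<gamma>_def add_divide_distrib smul_add_left)
    done
  also have "\<alpha> = qpow (- 2 * int (Suc (Suc n)))"
    unfolding \<alpha>_def by (simp add: qpow_add[symmetric] algebra_simps)
  also have "\<beta> = qint (int (Suc (Suc n))) / qdelta * qpow (- int (Suc (Suc n)))"
    unfolding \<beta>_def
    by ((simp add: qint_qpow field_simps)?; (simp add: qdelta_qpow qpow_split)?;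
        (simp add: field_simps)?; algebra?)
  also have "\<gamma> = qint (int (Suc (Suc n))) / qdelta * qpow (2 - 3 * int (Suc (Suc n)))"
    unfolding \<gamma>_def
    by ((simp add: qint_qpow field_simps)?; (simp add: qdelta_qpow qpow_split)?;
        (simp add: field_simps)?; algebra?)
  finally show ?case
    by (simp add: smul_diff right_diff_distrib mult.assoc pc)
qed

lemma F_dE:
  "F * dE a = smul (qpow (- 2 * int a)) (dE a * F)
     - smul (if a = 0 then 0 else 1 / qdelta)
         (dE (a - 1) * (smul (qpow (- int a)) 1 - smul (qpow (2 - 3 * int a)) (Ki * Ki)))"
proof (cases a)
  case (Suc n)
  have "inverse (qfact (Suc n)) * (qint (int (Suc n)) / qdelta) = 1 / qdelta * inverse (qfact n)"
    using qint_nonzero[of "int (Suc n)"] by (simp add: qfact_Suc field_simps)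
  with Suc show ?thesis
    by (simp only: dpow_smul smul_mult_right F_Echeck_power smul_diff smul_smul smul_mult_left)
      (simp add: mult.commute)
qed simp

abbreviation hb :: "int \<Rightarrow> nat \<Rightarrow> 'a" where "hb \<equiv> hbin phi Ki"

lemma hbin_Suc:
  "hb \<mu> (Suc c) = hb \<mu> c * smul (inverse (qpow (4 * int c + 4) - 1))
     (smul (qpow (4 * \<mu> + 4 * int c)) (Ki * Ki) - smul (qpow 2) 1)"
proof -
  have "qq ^ (4 * Suc c) = qpow (4 * int c + 4)"
    by (simp add: qpow_of_nat[symmetric] algebra_simps)
  then show ?thesis
    unfolding hbin.simps(2) smul_def by (simp add: qpow_def power2_eq_square)
qed

declare hbin.simps(2) [simp del]

lemma Ki_hbin: "Ki * hb \<mu> c = hb \<mu> c * Ki"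
proof (induction c)
  case (Suc c)
  then show ?case
    by (simp add: hbin_Suc mult.assoc[symmetric])
      (simp add: mult.assoc right_diff_distrib left_diff_distrib smul_diff)
qed simp

lemma Ki2_hbin: "Ki * Ki * hb \<mu> c = hb \<mu> c * (Ki * Ki)"
  by (simp add: mult.assoc Ki_hbin) (simp add: mult.assoc[symmetric] Ki_hbin)

lemma Ki2_hbin_Kpow: "Ki * Ki * hb \<mu> c * KP e = hb \<mu> c * KP (e - 2)"
proof -
  have "Ki * Ki * hb \<mu> c * KP e = hb \<mu> c * (Ki * Ki * KP e)"
    by (simp add: Ki2_hbin mult.assoc[symmetric])
  then show ?thesis by (simp add: Ki2_Kpow)
qed

lemma F_hbin: "F * hb \<mu> c = hb (\<mu> - 1) c * F"
proof (induction c)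
  case (Suc c)
  have e: "qpow (4 * \<mu> + 4 * int c) * qpow (- 4) = qpow (4 * (\<mu> - 1) + 4 * int c)"
    by (simp add: qpow_add[symmetric] algebra_simps)
  show ?case
    by (simp add: hbin_Suc mult.assoc[symmetric] Suc)
      (simp add: mult.assoc right_diff_distrib left_diff_distrib smul_diff F_Ki2 e)
qed simp

lemma hbin_Kpow_lower:
  "hb \<mu> c * KP (e + 2) = smul (qpow (4 * \<mu> + 4 * int c - 2)) (hb \<mu> c * KP e)
     - smul ((qpow (4 * int c + 4) - 1) * qpow (- 2)) (hb \<mu> (Suc c) * KP (e + 2))"
proof -
  define s where "s = inverse (qpow (4 * int c + 4) - 1)"
  have "s \<noteq> 0" using qpow_eq_1_iff[of "4 * int c + 4"] by (simp add: s_def)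
  moreover have "hb \<mu> (Suc c) * KP (e + 2)
      = smul (s * qpow (4 * \<mu> + 4 * int c)) (hb \<mu> c * KP e) - smul (s * qpow 2) (hb \<mu> c * KP (e + 2))"
    using Ki2_Kpow[of "e + 2"]
    by (simp add: hbin_Suc s_def left_diff_distrib smul_diff mult.assoc right_diff_distrib)
  ultimately have "hb \<mu> c * KP (e + 2) = smul (s * qpow (4 * \<mu> + 4 * int c) / (s * qpow 2)) (hb \<mu> c * KP e)
      - smul (inverse (s * qpow 2)) (hb \<mu> (Suc c) * KP (e + 2))"
    by (intro smul_solve) simp_all
  moreover have "s * qpow (4 * \<mu> + 4 * int c) / (s * qpow 2) = qpow (4 * \<mu> + 4 * int c - 2)"
    using \<open>s \<noteq> 0\<close> by (simp add: qpow_diff)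
  moreover have "inverse (s * qpow 2) = (qpow (4 * int c + 4) - 1) * qpow (- 2)"
    by (simp add: s_def qpow_minus)
  ultimately show ?thesis by simp
qed

lemma hbin_Suc_affine:
  "hb \<mu> (Suc c) = hb \<mu> c * (smul (qpow (4 * \<mu> + 4 * int c) / (qpow (4 * int c + 4) - 1)) (Ki * Ki)
     + smul (- (qpow 2 / (qpow (4 * int c + 4) - 1))) 1)"
  by (simp add: hbin_Suc smul_diff smul_uminus_left divide_inverse mult.commute)

lemma hbin_pred_param:
  "hb (\<mu> - 1) (Suc c) = hb \<mu> (Suc c) - smul (qpow (4 * \<mu> - 4)) (Ki * Ki * hb \<mu> c)"
proof (induction c)
  case 0
  have "qpow 4 \<noteq> 1" by (simp add: qpow_eq_1_iff)
  then have "inverse (qpow 4 - 1) * qpow (4 * (\<mu> - 1)) = inverse (qpow 4 - 1) * qpow (4 * \<mu>) - qpow (4 * \<mu> - 4)"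
    by (simp add: qpow_add[symmetric] qpow_diff field_simps)
  then show ?case
    by (simp add: hbin_Suc smul_diff smul_diff_left algebra_simps)
      (simp only: smul_add_left[symmetric] smul_diff_left[symmetric])
next
  case (Suc c)
  define y where "y = Ki * Ki"
  define X where "X = qpow (4 * int c + 4)"
  define R where "R = qpow (4 * \<mu> + 4 * int c)"
  define \<rho> where "\<rho> = qpow (4 * \<mu> - 4)"
  define u where "u = qpow 4"
  have R: "qpow (4 * \<mu> + 4 * int (Suc c)) = R * u" "qpow (4 * (\<mu> - 1) + 4 * int (Suc c)) = R"
    "qpow (4 * int (Suc c) + 4) = X * u" "qpow (4 * \<mu> + 4 * int c) = R" "qpow (4 * int c + 4) = X"
    by (simp_all add: R_def u_def X_def qpow_add[symmetric] algebra_simps)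
  have y_hb: "y * hb \<mu> n = hb \<mu> n * y" for n
    unfolding y_def by (rule Ki2_hbin)
  then have y_hb': "y * (hb \<mu> n * z) = hb \<mu> n * (y * z)" for n z
    by (simp add: mult.assoc[symmetric])
  have X: "X \<noteq> 0" "X \<noteq> 1" "X * u \<noteq> 1"
    by (simp_all add: X_def u_def qpow_eq_1_iff qpow_add[symmetric])
  have "\<rho> = R / X" by (simp add: \<rho>_def R_def X_def qpow_diff[symmetric] algebra_simps)
  with X have "(R / (X - 1) - \<rho>) * (R / (X * u - 1)) = R / (X - 1) * (R * u / (X * u - 1) - \<rho>)"
    "(R / (X - 1) - \<rho>) * - (qpow 2 / (X * u - 1)) + - (qpow 2 / (X - 1)) * (R / (X * u - 1))
      = R / (X - 1) * - (qpow 2 / (X * u - 1)) + - (qpow 2 / (X - 1)) * (R * u / (X * u - 1) - \<rho>)"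
    by (simp_all add: field_simps; algebra)+
  moreover have "(smul a1 y + smul b1 1) * (smul a2 y + smul b2 1)
      = smul (a1 * a2) (y * y) + smul (a1 * b2 + b1 * a2) y + smul (b1 * b2) 1" for a1 a2 b1 b2
    by (simp add: distrib_left distrib_right smul_add smul_add_left algebra_simps)
  ultimately have key: "(smul (R / (X - 1) - \<rho>) y + smul (- (qpow 2 / (X - 1))) 1)
        * (smul (R / (X * u - 1)) y + smul (- (qpow 2 / (X * u - 1))) 1)
      = (smul (R / (X - 1)) y + smul (- (qpow 2 / (X - 1))) 1)
        * (smul (R * u / (X * u - 1) - \<rho>) y + smul (- (qpow 2 / (X * u - 1))) 1)"
    by (simp only:)
  have "hb (\<mu> - 1) (Suc (Suc c))
      = (hb \<mu> (Suc c) - smul \<rho> (y * hb \<mu> c)) * (smul (R / (X * u - 1)) y + smul (- (qpow 2 / (X * u - 1))) 1)"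
    by (simp only: hbin_Suc_affine[of "\<mu> - 1" "Suc c"] Suc R \<rho>_def y_def)
  also have "\<dots> = hb \<mu> c * ((smul (R / (X - 1) - \<rho>) y + smul (- (qpow 2 / (X - 1))) 1)
        * (smul (R / (X * u - 1)) y + smul (- (qpow 2 / (X * u - 1))) 1))"
    by (simp only: hbin_Suc_affine[of \<mu> c] R y_def[symmetric]) (simp add: y_hb smul_diff_left algebra_simps)
  also have "\<dots> = hb \<mu> (Suc (Suc c)) - smul \<rho> (y * hb \<mu> (Suc c))"
    unfolding key
    by (simp only: hbin_Suc_affine[of \<mu> "Suc c"] hbin_Suc_affine[of \<mu> c] R y_def[symmetric])
      (simp add: y_hb y_hb' smul_diff_left algebra_simps)
  finally show ?case by (simp add: \<rho>_def y_def)
qed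

section \<open>Monomials and the action of \<open>t\<close>\<close>

definition mon :: "int \<Rightarrow> nat \<Rightarrow> nat \<Rightarrow> int \<Rightarrow> nat \<Rightarrow> 'a" where
  "mon \<mu> a c e d = dE a * hb \<mu> c * KP e * dF d"

lemma Echeck_mon: "Ech * mon \<mu> a c e d = smul (qint (int a + 1)) (mon \<mu> (Suc a) c e d)"
  by (simp add: mon_def mult.assoc[symmetric] mult_dpow)

lemma Ki_mon: "Ki * mon \<mu> a c e d = smul (qpow (- 2 * int a)) (mon \<mu> a c (e - 1) d)"
proof -
  have "Ki * mon \<mu> a c e d = smul (qpow (- 2 * int a)) (dE a * (Ki * hb \<mu> c) * KP e * dF d)"
    by (simp add: mon_def mult.assoc[symmetric] Ki_dE)
  then show ?thesis by (simp add: Ki_hbin mon_def Kpow_pred mult.assoc)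
qed

lemma mon_Kpow_lower:
  "mon \<mu> a c e d = smul (qpow (4 * \<mu> + 4 * int c - 2)) (mon \<mu> a c (e - 2) d)
     - smul ((qpow (4 * int c + 4) - 1) * qpow (- 2)) (mon \<mu> a (Suc c) e d)"
proof -
  have "hb \<mu> c * KP e = smul (qpow (4 * \<mu> + 4 * int c - 2)) (hb \<mu> c * KP (e - 2))
      - smul ((qpow (4 * int c + 4) - 1) * qpow (- 2)) (hb \<mu> (Suc c) * KP e)"
    using hbin_Kpow_lower[of \<mu> c "e - 2"] by simp
  then have "dE a * (hb \<mu> c * KP e) * dF d = dE a * (smul (qpow (4 * \<mu> + 4 * int c - 2)) (hb \<mu> c * KP (e - 2))
      - smul ((qpow (4 * int c + 4) - 1) * qpow (- 2)) (hb \<mu> (Suc c) * KP e)) * dF d"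
    by simp
  then show ?thesis
    by (simp add: mon_def right_diff_distrib left_diff_distrib smul_diff mult.assoc)
qed

lemma F_hbin_Kpow_dF:
  "F * (hb \<mu> c * KP e * dF d) = smul (qpow (2 * e) * qint (int d + 1)) (hb \<mu> c * KP e * dF (Suc d))
     - smul (if c = 0 then 0 else qpow (2 * e) * qint (int d + 1) * qpow (4 * \<mu> - 4))
         (hb \<mu> (c - 1) * KP (e - 2) * dF (Suc d))"
proof -
  have F_moved: "F * (hb \<mu> c * KP e * dF d)
      = hb (\<mu> - 1) c * smul (qpow (2 * e) * qint (int d + 1)) (KP e * dF (Suc d))"
    by (simp add: mult.assoc[symmetric] F_hbin) (simp add: mult.assoc F_Kpow mult_dpow)
  show ?thesis
  proof (cases c)
    case 0
    with F_moved show ?thesis by (simp add: mult.assoc)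
  next
    case (Suc c')
    have "F * (hb \<mu> c * KP e * dF d) = (hb \<mu> c - smul (qpow (4 * \<mu> - 4)) (Ki * Ki * hb \<mu> c'))
        * smul (qpow (2 * e) * qint (int d + 1)) (KP e * dF (Suc d))"
      using F_moved Suc by (simp only: hbin_pred_param)
    also have "\<dots> = smul (qpow (2 * e) * qint (int d + 1)) (hb \<mu> c * KP e * dF (Suc d))
        - smul (qpow (2 * e) * qint (int d + 1) * qpow (4 * \<mu> - 4)) ((Ki * Ki * hb \<mu> c' * KP e) * dF (Suc d))"
      by (simp add: left_diff_distrib smul_diff mult.assoc mult.commute)
    finally show ?thesis using Suc by (simp only: Ki2_hbin_Kpow) (simp add: mult.assoc)
  qed
qed

lemma F_mon:
  "F * mon \<mu> a c e d =
     smul (qpow (- 2 * int a) * (qpow (2 * e) * qint (int d + 1))) (mon \<mu> a c e (Suc d))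
   - smul (qpow (- 2 * int a) * (if c = 0 then 0 else qpow (2 * e) * qint (int d + 1) * qpow (4 * \<mu> - 4)))
       (mon \<mu> a (c - 1) (e - 2) (Suc d))
   - smul ((if a = 0 then 0 else 1 / qdelta) * qpow (- int a)) (mon \<mu> (a - 1) c e d)
   + smul ((if a = 0 then 0 else 1 / qdelta) * qpow (2 - 3 * int a)) (mon \<mu> (a - 1) c (e - 2) d)"
proof -
  have "F * mon \<mu> a c e d = (F * dE a) * (hb \<mu> c * KP e * dF d)" by (simp add: mon_def mult.assoc)
  also have "\<dots> = smul (qpow (- 2 * int a)) (dE a * (F * (hb \<mu> c * KP e * dF d)))
     - smul ((if a = 0 then 0 else 1 / qdelta) * qpow (- int a)) (mon \<mu> (a - 1) c e d)
     + smul ((if a = 0 then 0 else 1 / qdelta) * qpow (2 - 3 * int a)) (dE (a - 1) * (Ki * Ki * hb \<mu> c * KP e) * dF d)"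
    by (simp add: F_dE mon_def left_diff_distrib right_diff_distrib smul_diff mult.assoc)
  also have "\<dots> = smul (qpow (- 2 * int a) * (qpow (2 * e) * qint (int d + 1))) (mon \<mu> a c e (Suc d))
   - smul (qpow (- 2 * int a) * (if c = 0 then 0 else qpow (2 * e) * qint (int d + 1) * qpow (4 * \<mu> - 4)))
       (mon \<mu> a (c - 1) (e - 2) (Suc d))
   - smul ((if a = 0 then 0 else 1 / qdelta) * qpow (- int a)) (mon \<mu> (a - 1) c e d)
   + smul ((if a = 0 then 0 else 1 / qdelta) * qpow (2 - 3 * int a)) (mon \<mu> (a - 1) c (e - 2) d)"
    by (simp only: F_hbin_Kpow_dF Ki2_hbin_Kpow) (simp add: mon_def right_diff_distrib smul_diff mult.assoc)
  finally show ?thesis .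
qed

lemma tel_eq: "tel phi E F Ki \<kappa> = F + Ech + smul \<kappa> Ki"
  by (simp add: tel_def smul_def)

text \<open>Moving \<open>F\<close> past \<open>dE a\<close> produces a monomial whose \<open>K\<close>-exponent is two too high for its
  degree; \<open>mon_Kpow_lower\<close> rewrites it so that all monomials on the right have the same degree.\<close>
lemma t_mon:
  "(F + Ech + smul \<kappa> Ki) * mon \<mu> a c e d =
     smul (qint (int a + 1)) (mon \<mu> (Suc a) c e d)
   + smul (\<kappa> * qpow (- 2 * int a)) (mon \<mu> a c (e - 1) d)
   + smul (qpow (- 2 * int a) * (qpow (2 * e) * qint (int d + 1))) (mon \<mu> a c e (Suc d))
   - smul (qpow (- 2 * int a) * (if c = 0 then 0 else qpow (2 * e) * qint (int d + 1) * qpow (4 * \<mu> - 4)))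
       (mon \<mu> a (c - 1) (e - 2) (Suc d))
   - smul ((if a = 0 then 0 else 1 / qdelta) * qpow (- int a) * qpow (4 * \<mu> + 4 * int c - 2))
       (mon \<mu> (a - 1) c (e - 2) d)
   + smul ((if a = 0 then 0 else 1 / qdelta) * qpow (- int a) * ((qpow (4 * int c + 4) - 1) * qpow (- 2)))
       (mon \<mu> (a - 1) (Suc c) e d)
   + smul ((if a = 0 then 0 else 1 / qdelta) * qpow (2 - 3 * int a)) (mon \<mu> (a - 1) c (e - 2) d)"
  by (simp only: distrib_right smul_mult_left F_mon Echeck_mon Ki_mon
      mon_Kpow_lower[of \<mu> "a - 1" c e d] smul_diff smul_smul) (simp add: algebra_simps)

end

section \<open>Coefficient families on \<open>\<int>\<^sup>3\<close>\<close>

type_synonym idx = "int \<times> int \<times> int"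

definition finite_support :: "(idx \<Rightarrow> qf) \<Rightarrow> bool" where
  "finite_support w \<longleftrightarrow> finite {p. w p \<noteq> 0}"

fun nonneg :: "idx \<Rightarrow> bool" where
  "nonneg (a, c, d) \<longleftrightarrow> 0 \<le> a \<and> 0 \<le> c \<and> 0 \<le> d"

lemma nonneg_obtain_nat:
  assumes "nonneg p"
  obtains a c d :: nat where "p = (int a, int c, int d)"
  using assms by (cases p) (metis nonneg.simps nonneg_int_cases)

text \<open>A list \<open>L\<close> of pairs \<open>(\<delta>, f)\<close> encodes the operator \<open>Y \<mapsto> \<lambda>p. \<Sum>(\<delta>, f)\<in>L. f p \<cdot> Y (p + \<delta>)\<close>
  on families indexed by \<open>\<int>\<^sup>3\<close>; \<open>shift_adjoint L\<close> is its transpose acting on coefficients.\<close>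
definition shift_adjoint :: "(idx \<times> (idx \<Rightarrow> qf)) list \<Rightarrow> (idx \<Rightarrow> qf) \<Rightarrow> idx \<Rightarrow> qf" where
  "shift_adjoint L w p = (\<Sum>(\<delta>, f)\<leftarrow>L. f (p - \<delta>) * w (p - \<delta>))"

lemma shift_adjoint_Nil [simp]: "shift_adjoint [] w p = 0"
  by (simp add: shift_adjoint_def)

lemma shift_adjoint_Cons [simp]:
  "shift_adjoint ((\<delta>, f) # L) w p = f (p - \<delta>) * w (p - \<delta>) + shift_adjoint L w p"
  by (simp add: shift_adjoint_def)

lemma finite_support_shift: "finite_support w \<Longrightarrow> finite_support (\<lambda>p. f p * w (p - \<delta>))"
proof -
  assume "finite_support w"
  then have "finite ((\<lambda>p. p - \<delta>) -` {p. w p \<noteq> 0})"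
    unfolding finite_support_def by (rule finite_vimageI) (simp add: inj_def)
  then show ?thesis
    unfolding finite_support_def by (rule finite_subset[rotated]) auto
qed

lemma finite_support_shift_adjoint: "finite_support w \<Longrightarrow> finite_support (shift_adjoint L w)"
proof (induction L)
  case Nil
  then show ?case by (simp add: finite_support_def)
next
  case (Cons j L)
  obtain \<delta> f where j: "j = (\<delta>, f)" by fastforce
  have "{p. shift_adjoint (j # L) w p \<noteq> 0}
      \<subseteq> {p. f (p - \<delta>) * w (p - \<delta>) \<noteq> 0} \<union> {p. shift_adjoint L w p \<noteq> 0}"
    by (auto simp: j)
  with finite_support_shift[OF Cons.prems, of "\<lambda>p. f (p - \<delta>)" \<delta>] Cons.IH[OF Cons.prems] show ?case
    unfolding finite_support_def by (auto intro: finite_subset)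
qed

lemma finite_support_scale: "finite_support w \<Longrightarrow> finite_support (\<lambda>p. x * w p)"
  unfolding finite_support_def by (rule finite_subset[rotated], assumption) auto

lemma Sum_any_shift: "Sum_any (\<lambda>p. g (p + \<delta>)) = Sum_any (g :: idx \<Rightarrow> 'b::comm_monoid_add)"
proof (rule Sum_any.reindex_cong[symmetric])
  show "bij (\<lambda>p :: idx. p + \<delta>)"
    by (rule bijI) (simp add: inj_def, rule surjI[of _ "\<lambda>p. p - \<delta>"], simp)
qed (simp add: comp_def)

definition t_shifts :: "int \<Rightarrow> int \<Rightarrow> qf \<Rightarrow> (idx \<times> (idx \<Rightarrow> qf)) list" where
  "t_shifts k \<mu> \<kappa> = [
     ((1, 0, 0), \<lambda>(a, c, d). qint (a + 1)),
     ((0, 0, 0), \<lambda>(a, c, d). \<kappa> * qpow (- 2 * a)),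
     ((0, 0, 1), \<lambda>(a, c, d). qpow (- 2 * a) * (qpow (2 * (a + d + 2 * c + k)) * qint (d + 1))),
     ((0, -1, 1), \<lambda>(a, c, d). - (qpow (- 2 * a) * (qpow (2 * (a + d + 2 * c + k)) * qint (d + 1) * qpow (4 * \<mu> - 4)))),
     ((-1, 0, 0), \<lambda>(a, c, d). qpow (2 - 3 * a) / qdelta - qpow (- a) / qdelta * qpow (4 * \<mu> + 4 * c - 2)),
     ((-1, 1, 0), \<lambda>(a, c, d). qpow (- a) / qdelta * ((qpow (4 * c + 4) - 1) * qpow (- 2)))]"

definition K2_shifts :: "int \<Rightarrow> (idx \<times> (idx \<Rightarrow> qf)) list" where
  "K2_shifts \<mu> = [((0, 0, 0), \<lambda>(a, c, d). qpow (4 * \<mu> + 4 * c - 2)),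
                  ((0, 1, 0), \<lambda>(a, c, d). - ((qpow (4 * c + 4) - 1) * qpow (- 2)))]"

definition hpred_shifts :: "int \<Rightarrow> (idx \<times> (idx \<Rightarrow> qf)) list" where
  "hpred_shifts \<mu> = [((0, 0, 0), \<lambda>p. 1), ((0, -1, 0), \<lambda>p. - qpow (4 * \<mu> - 4))]"

context Uq_rep
begin

lemma finite_support_smul: "finite_support w \<Longrightarrow> finite {p. smul (w p) (Y p) \<noteq> 0}"
  unfolding finite_support_def by (rule finite_subset[of _ "{p. w p \<noteq> 0}"]) auto

lemma Sum_any_shift_adjoint:
  assumes w: "finite_support w"
  shows "Sum_any (\<lambda>p. smul (w p) (\<Sum>(\<delta>, f)\<leftarrow>L. smul (f p) (Y (p + \<delta>))))
       = Sum_any (\<lambda>p. smul (shift_adjoint L w p) (Y p))"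
proof (induction L)
  case (Cons j L)
  obtain \<delta> f where j: "j = (\<delta>, f)" by fastforce
  have "Sum_any (\<lambda>p. smul (w p) (smul (f p) (Y (p + \<delta>))))
      = Sum_any (\<lambda>p. smul (f (p - \<delta>) * w (p - \<delta>)) (Y p))"
    using Sum_any_shift[of "\<lambda>p. smul (f (p - \<delta>) * w (p - \<delta>)) (Y p)" \<delta>] by (simp add: mult.commute)
  moreover have "finite_support (\<lambda>p. w p * f p)"
    using w unfolding finite_support_def by (rule finite_subset[rotated]) auto
  then have "finite {p. smul (w p) (smul (f p) (Y (p + \<delta>))) \<noteq> 0}"
    using finite_support_smul by simp
  moreover have "finite {p. smul (w p) (\<Sum>(\<delta>, f)\<leftarrow>L. smul (f p) (Y (p + \<delta>))) \<noteq> 0}"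
    "finite {p. smul (f (p - \<delta>) * w (p - \<delta>)) (Y p) \<noteq> 0}"
    "finite {p. smul (shift_adjoint L w p) (Y p) \<noteq> 0}"
    using w finite_support_shift[OF w, of "\<lambda>p. f (p - \<delta>)" \<delta>]
    by (simp_all add: finite_support_smul finite_support_shift_adjoint)
  ultimately show ?case
    using Cons.IH by (simp add: j smul_add smul_add_left Sum_any.distrib)
qed simp

text \<open>Tying the exponent of \<open>K\<close> to the degree \<open>a + d + 2c\<close> makes multiplication by \<open>t\<close>
  lower \<open>k\<close> by one.\<close>
definition pbw :: "int \<Rightarrow> int \<Rightarrow> idx \<Rightarrow> 'a" where
  "pbw k \<mu> p = (case p of (a, c, d) \<Rightarrow>
     if nonneg p then mon \<mu> (nat a) (nat c) (a + d + 2 * c + k) (nat d) else 0)"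

definition pbw_sum :: "int \<Rightarrow> int \<Rightarrow> (idx \<Rightarrow> qf) \<Rightarrow> 'a" where
  "pbw_sum k \<mu> w = Sum_any (\<lambda>p. smul (w p) (pbw k \<mu> p))"

lemma pbw_nat: "pbw k \<mu> (int a, int c, int d) = mon \<mu> a c (int a + int d + 2 * int c + k) d"
  by (simp add: pbw_def)

lemma pbw_not_nonneg: "\<not> nonneg p \<Longrightarrow> pbw k \<mu> p = 0"
  by (cases p) (auto simp: pbw_def)

lemma pbw_sum_cong: "(\<And>p. nonneg p \<Longrightarrow> w p = w' p) \<Longrightarrow> pbw_sum k \<mu> w = pbw_sum k \<mu> w'"
  unfolding pbw_sum_def by (rule Sum_any.cong) (metis pbw_not_nonneg smul_zero(2))

lemma pbw_sum_cong_nat: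
  "(\<And>a c d :: nat. w (int a, int c, int d) = w' (int a, int c, int d)) \<Longrightarrow> pbw_sum k \<mu> w = pbw_sum k \<mu> w'"
  by (rule pbw_sum_cong) (metis nonneg_obtain_nat)

lemma smul_pbw_sum: "finite_support w \<Longrightarrow> smul s (pbw_sum k \<mu> w) = pbw_sum k \<mu> (\<lambda>p. s * w p)"
proof -
  assume "finite_support w"
  from Sum_any_right_distrib[OF finite_support_smul[OF this], of "phi s"] show ?thesis
    unfolding pbw_sum_def by (simp add: smul_def phi_mult mult.assoc)
qed

lemma pbw_sum_add:
  "finite_support w \<Longrightarrow> finite_support w' \<Longrightarrow> pbw_sum k \<mu> w + pbw_sum k \<mu> w' = pbw_sum k \<mu> (\<lambda>p. w p + w' p)"
  unfolding pbw_sum_def by (simp add: Sum_any.distrib[symmetric] finite_support_smul smul_add_left)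

lemma pbw_sum_transfer:
  assumes w: "finite_support w" and supp: "\<And>p. w p \<noteq> 0 \<Longrightarrow> nonneg p"
    and X: "\<And>a c d. X (int a, int c, int d) = (\<Sum>(\<delta>, f)\<leftarrow>L. smul (f (int a, int c, int d)) (pbw k \<mu> ((int a, int c, int d) + \<delta>)))"
  shows "Sum_any (\<lambda>p. smul (w p) (X p)) = pbw_sum k \<mu> (shift_adjoint L w)"
proof -
  have "smul (w p) (X p) = smul (w p) (\<Sum>(\<delta>, f)\<leftarrow>L. smul (f p) (pbw k \<mu> (p + \<delta>)))" for p
  proof (cases "w p = 0")
    case False
    then obtain a c d :: nat where "p = (int a, int c, int d)"
      using supp nonneg_obtain_nat by blast
    then show ?thesis by (simp only: X)
  qed simp
  then show ?thesis
    unfolding pbw_sum_def by (simp only: Sum_any_shift_adjoint[OF w])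
qed

lemma mult_pbw_sum:
  "finite_support w \<Longrightarrow> x * pbw_sum k \<mu> w = Sum_any (\<lambda>p. smul (w p) (x * pbw k \<mu> p))"
  unfolding pbw_sum_def by (simp add: Sum_any_right_distrib finite_support_smul)

lemma t_pbw:
  "(F + Ech + smul \<kappa> Ki) * pbw k \<mu> (int a, int c, int d) =
     (\<Sum>(\<delta>, f)\<leftarrow>t_shifts k \<mu> \<kappa>. smul (f (int a, int c, int d)) (pbw (k - 1) \<mu> ((int a, int c, int d) + \<delta>)))"
proof -
  define e where "e = int a + int d + 2 * int c + k"
  have shifted:
    "pbw (k - 1) \<mu> (int a + 1, int c + 0, int d + 0) = mon \<mu> (Suc a) c e d"
    "pbw (k - 1) \<mu> (int a + 0, int c + 0, int d + 0) = mon \<mu> a c (e - 1) d"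
    "pbw (k - 1) \<mu> (int a + 0, int c + 0, int d + 1) = mon \<mu> a c e (Suc d)"
    using pbw_nat[of "k - 1" \<mu> "Suc a" c d] pbw_nat[of "k - 1" \<mu> a c d] pbw_nat[of "k - 1" \<mu> a c "Suc d"]
    by (simp_all add: e_def algebra_simps)
  have shifted_c:
    "pbw (k - 1) \<mu> (int a + 0, int c + - 1, int d + 1) = (if c = 0 then 0 else mon \<mu> a (c - 1) (e - 2) (Suc d))"
  proof (cases c)
    case (Suc c')
    then show ?thesis using pbw_nat[of "k - 1" \<mu> a c' "Suc d"] by (simp add: e_def algebra_simps)
  qed (simp add: pbw_def)
  have shifted_a:
    "pbw (k - 1) \<mu> (int a + - 1, int c + 0, int d + 0) = (if a = 0 then 0 else mon \<mu> (a - 1) c (e - 2) d)"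
    "pbw (k - 1) \<mu> (int a + - 1, int c + 1, int d + 0) = (if a = 0 then 0 else mon \<mu> (a - 1) (Suc c) e d)"
    using pbw_nat[of "k - 1" \<mu> "a - 1" c d] pbw_nat[of "k - 1" \<mu> "a - 1" "Suc c" d]
    by (cases "a = 0"; simp add: pbw_def e_def algebra_simps of_nat_diff)+
  have "pbw k \<mu> (int a, int c, int d) = mon \<mu> a c e d" by (simp add: pbw_nat e_def)
  then show ?thesis
    unfolding t_shifts_def
    apply (simp only: t_mon)
    apply (simp only: list.map sum_list_simps add_Pair prod.case shifted shifted_c shifted_a)
    apply (cases "a = 0"; cases "c = 0")
    apply (simp_all add: e_def smul_diff_left smul_add_left smul_uminus_left algebra_simps)
    done
qed

lemma pbw_K2:
  "pbw (k + 2) \<mu> (int a, int c, int d) =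
     (\<Sum>(\<delta>, f)\<leftarrow>K2_shifts \<mu>. smul (f (int a, int c, int d)) (pbw k \<mu> ((int a, int c, int d) + \<delta>)))"
proof -
  have "pbw k \<mu> (int a + 0, int c + 0, int d + 0) = mon \<mu> a c (int a + int d + 2 * int c + k + 2 - 2) d"
    "pbw k \<mu> (int a + 0, int c + 1, int d + 0) = mon \<mu> a (Suc c) (int a + int d + 2 * int c + k + 2) d"
    using pbw_nat[of k \<mu> a "Suc c" d] by (simp_all add: pbw_nat algebra_simps)
  then show ?thesis
    unfolding pbw_nat[of "k + 2"] K2_shifts_def
    by (subst mon_Kpow_lower)
      (simp only: list.map sum_list_simps add_Pair prod.case add.assoc, simp add: smul_uminus_left)
qed

lemma pbw_hpred:
  "pbw k (\<mu> - 1) (int a, int c, int d) =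
     (\<Sum>(\<delta>, f)\<leftarrow>hpred_shifts \<mu>. smul (f (int a, int c, int d)) (pbw k \<mu> ((int a, int c, int d) + \<delta>)))"
proof (cases c)
  case 0
  then show ?thesis by (simp add: hpred_shifts_def pbw_def mon_def)
next
  case (Suc c')
  define e where "e = int a + int d + 2 * int c + k"
  have "pbw k (\<mu> - 1) (int a, int c, int d) = dE a * (hb \<mu> c - smul (qpow (4 * \<mu> - 4)) (Ki * Ki * hb \<mu> c')) * KP e * dF d"
    by (simp only: pbw_nat mon_def Suc hbin_pred_param e_def)
  also have "\<dots> = mon \<mu> a c e d - smul (qpow (4 * \<mu> - 4)) (dE a * (Ki * Ki * hb \<mu> c' * KP e) * dF d)"
    by (simp add: mon_def right_diff_distrib left_diff_distrib smul_diff mult.assoc)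
  also have "\<dots> = mon \<mu> a c e d - smul (qpow (4 * \<mu> - 4)) (mon \<mu> a c' (e - 2) d)"
    by (simp only: Ki2_hbin_Kpow mon_def) (simp add: mult.assoc)
  also have "\<dots> = (\<Sum>(\<delta>, f)\<leftarrow>hpred_shifts \<mu>. smul (f (int a, int c, int d)) (pbw k \<mu> ((int a, int c, int d) + \<delta>)))"
    using pbw_nat[of k \<mu> a c' d] pbw_nat[of k \<mu> a c d] Suc
    by (simp add: hpred_shifts_def pbw_nat smul_uminus_left e_def algebra_simps)
  finally show ?thesis .
qed

lemma t_pbw_sum:
  assumes "finite_support w" and "\<And>p. w p \<noteq> 0 \<Longrightarrow> nonneg p"
  shows "(F + Ech + smul \<kappa> Ki) * pbw_sum k \<mu> w = pbw_sum (k - 1) \<mu> (shift_adjoint (t_shifts k \<mu> \<kappa>) w)"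
  unfolding mult_pbw_sum[OF assms(1)] by (rule pbw_sum_transfer[OF assms t_pbw])

lemma pbw_sum_K2:
  assumes "finite_support w" and "\<And>p. w p \<noteq> 0 \<Longrightarrow> nonneg p"
  shows "pbw_sum (k + 2) \<mu> w = pbw_sum k \<mu> (shift_adjoint (K2_shifts \<mu>) w)"
  unfolding pbw_sum_def[of "k + 2"] by (rule pbw_sum_transfer[OF assms pbw_K2])

lemma pbw_sum_hpred:
  assumes "finite_support w" and "\<And>p. w p \<noteq> 0 \<Longrightarrow> nonneg p"
  shows "pbw_sum k (\<mu> - 1) w = pbw_sum k \<mu> (shift_adjoint (hpred_shifts \<mu>) w)"
  unfolding pbw_sum_def[of k "\<mu> - 1"] by (rule pbw_sum_transfer[OF assms pbw_hpred])

end

section \<open>The coefficients of the divided powers of \<open>t\<close>\<close>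

definition cexp :: "int \<Rightarrow> int \<Rightarrow> int \<Rightarrow> int \<Rightarrow> int" where
  "cexp n a c d = c * (2 * c - 1) - 2 * c * (n mod 2) - (a + d) * (n - a - d - 2 * c) - a * d"

lemma cexp_even: "cexp (2 * m) a c d = c * (2 * c - 1) - (a + d) * (2 * m - a - d - 2 * c) - a * d"
  by (simp add: cexp_def)

lemma cexp_odd:
  "cexp (2 * m + 1) a c d = c * (2 * c - 1) - 2 * c - (a + d) * (2 * m + 1 - a - d - 2 * c) - a * d"
  by (simp add: cexp_def)

definition tcoeff_at :: "int \<Rightarrow> qf \<Rightarrow> int \<Rightarrow> int \<Rightarrow> int \<Rightarrow> qf" where
  "tcoeff_at n \<kappa> a c d = qpow (cexp n a c d) * pdiv (n - a - d - 2 * c) \<kappa>"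

definition tcoeff :: "int \<Rightarrow> qf \<Rightarrow> idx \<Rightarrow> qf" where
  "tcoeff n \<kappa> p = (case p of (a, c, d) \<Rightarrow> if nonneg p then tcoeff_at n \<kappa> a c d else 0)"

lemma tcoeff_nonneg: "0 \<le> a \<Longrightarrow> 0 \<le> c \<Longrightarrow> 0 \<le> d \<Longrightarrow> tcoeff n \<kappa> (a, c, d) = tcoeff_at n \<kappa> a c d"
  by (simp add: tcoeff_def)

text \<open>Each coefficient function enters the action of \<open>t\<close> only multiplied by a factor that
  vanishes exactly where the shifted index leaves \<open>\<nat>\<^sup>3\<close>, so the guard in \<open>tcoeff\<close> can be dropped.\<close>
lemma tcoeff_guard_a:
  "0 \<le> a \<Longrightarrow> 0 \<le> c \<Longrightarrow> 0 \<le> d \<Longrightarrow> qint a * tcoeff n \<kappa> (a - 1, c, d) = qint a * tcoeff_at n \<kappa> (a - 1) c d"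
  by (cases "a = 0") (simp_all add: tcoeff_def)

lemma tcoeff_guard_d:
  "0 \<le> a \<Longrightarrow> 0 \<le> c \<Longrightarrow> 0 \<le> d \<Longrightarrow> qint d * tcoeff n \<kappa> (a, c, d - 1) = qint d * tcoeff_at n \<kappa> a c (d - 1)"
  by (cases "d = 0") (simp_all add: tcoeff_def)

lemma tcoeff_guard_c:
  "0 \<le> a \<Longrightarrow> 0 \<le> c \<Longrightarrow> 0 \<le> d \<Longrightarrow>
    (qpow (4 * c) - 1) * tcoeff n \<kappa> (a, c - 1, d) = (qpow (4 * c) - 1) * tcoeff_at n \<kappa> a (c - 1) d"
  by (cases "c = 0") (simp_all add: tcoeff_def)

lemma tcoeff_support: "tcoeff n \<kappa> p \<noteq> 0 \<Longrightarrow> nonneg p"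
  by (cases p) (auto simp: tcoeff_def split: if_splits)

lemma finite_support_tcoeff: "finite_support (tcoeff n \<kappa>)"
proof -
  have "{p. tcoeff n \<kappa> p \<noteq> 0} \<subseteq> {0..\<bar>n\<bar>} \<times> {0..\<bar>n\<bar>} \<times> {0..\<bar>n\<bar>}"
    by (auto simp: tcoeff_def tcoeff_at_def pdiv_def split: if_splits)
  then show ?thesis unfolding finite_support_def by (rule finite_subset) simp
qed

lemma shift_adjoint_t_shifts:
  "shift_adjoint (t_shifts k \<mu> \<kappa>) w (a, c, d) =
     qint a * w (a - 1, c, d)
   + \<kappa> * qpow (- 2 * a) * w (a, c, d)
   + qpow (- 2 * a) * qpow (2 * (a + d + 2 * c + k - 1)) * (qint d * w (a, c, d - 1))
   - qpow (- 2 * a) * qpow (2 * (a + d + 2 * c + k + 1)) * qpow (4 * \<mu> - 4) * (qint d * w (a, c + 1, d - 1))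
   + (qpow (- 1 - 3 * a) - qpow (- 1 - a) * qpow (4 * \<mu> + 4 * c - 2)) / qdelta * w (a + 1, c, d)
   + qpow (- 1 - a) * qpow (- 2) / qdelta * ((qpow (4 * c) - 1) * w (a + 1, c - 1, d))"
  by (simp add: t_shifts_def diff_divide_distrib algebra_simps)

lemma shift_adjoint_K2_shifts:
  "shift_adjoint (K2_shifts \<mu>) w (a, c, d) =
     qpow (4 * \<mu> + 4 * c - 2) * w (a, c, d) - qpow (- 2) * ((qpow (4 * c) - 1) * w (a, c - 1, d))"
  by (simp add: K2_shifts_def algebra_simps)

lemma shift_adjoint_hpred_shifts:
  "shift_adjoint (hpred_shifts \<mu>) w (a, c, d) = w (a, c, d) - qpow (4 * \<mu> - 4) * w (a, c + 1, d)"
  by (simp add: hpred_shifts_def)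

lemma qpow_cexp_even_shifts:
  fixes a c d m :: int
  defines "N \<equiv> 2 * m - a - d - 2 * c" and "Q \<equiv> qpow (cexp (2 * m + 1) a c d)"
  shows "qpow (cexp (2 * m) (a - 1) c d) = Q * qpow (N + 1 + d + 2 * c)"
    "qpow (cexp (2 * m) a c d) = Q * qpow (2 * c + a + d)"
    "qpow (cexp (2 * m) a c (d - 1)) = Q * qpow (N + 1 + a + 2 * c)"
    "qpow (cexp (2 * m) a (c + 1) (d - 1)) = Q * qpow (6 * c + 2 * a + 2 * d + N + a)"
    "qpow (cexp (2 * m) (a + 1) c d) = Q * qpow (2 * c + 2 * a + d - N + 1)"
    "qpow (cexp (2 * m) (a + 1) (c - 1) d) = Q * qpow (- 2 * c + 2 - N - d)"
  unfolding Q_def qpow_add[symmetric] cexp_even cexp_odd by (simp_all add: N_def algebra_simps)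

lemma qpow_cexp_odd_shifts:
  fixes a c d m :: int
  defines "N \<equiv> 2 * m + 1 - a - d - 2 * c" and "Q \<equiv> qpow (cexp (2 * m + 1) a c d)"
  shows "qpow (cexp (2 * m + 1) (a - 1) c d) = Q * qpow (N + 1 - a)"
    "qpow (cexp (2 * m + 1) a c (d - 1)) = Q * qpow (N + 1 - d)"
    "qpow (cexp (2 * m + 1) a (c + 1) (d - 1)) = Q * qpow (4 * c + 2 * a + d + N - 2)"
    "qpow (cexp (2 * m + 1) (a + 1) c d) = Q * qpow (a - N + 1)"
    "qpow (cexp (2 * m + 1) (a + 1) (c - 1) d) = Q * qpow (- 4 * c + 4 - a - 2 * d - N)"
    "qpow (cexp (2 * (m + 1)) a c d) = Q * qpow (2 * c - a - d)"
    "qpow (cexp (2 * (m + 1)) a (c + 1) d) = Q * qpow (6 * c + 1 + a + d)"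
    "qpow (cexp (2 * m) a c d) = Q * qpow (2 * c + a + d)"
    "qpow (cexp (2 * m) a (c - 1) d) = Q * qpow (- 2 * c + 3 - a - d)"
  unfolding Q_def qpow_add[symmetric] cexp_even cexp_odd by (simp_all add: N_def algebra_simps)

text \<open>The pointwise form of \<open>t t^(2m) = [2m+1] t^(2m+1)\<close> at the index \<open>(a, c, d)\<close>, after
  \<open>\<kappa> p^(N)(\<kappa>)\<close> has been eliminated by the recurrence; \<open>PA\<close> and \<open>PB\<close> stand for
  \<open>p^(N+1)(\<kappa>)\<close> and \<open>p^(N-1)(\<kappa>)\<close>.\<close>
lemma even_step_identity:
  fixes a c d m :: int and PA PB :: qf
  defines "N \<equiv> 2 * m - a - d - 2 * c"
  shows "qint a * (qpow (cexp (2 * m) (a - 1) c d) * PA)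
   + qpow (- 2 * a) * qpow (cexp (2 * m) a c d) * (qint (N + 1) * PA - qpow (1 - 2 * N) * qint (N - 1) * PB)
   + qpow (- 2 * a) * qpow (2 * (a + d + 2 * c - 2 * m - 1)) * (qint d * (qpow (cexp (2 * m) a c (d - 1)) * PA))
   - qpow (- 2 * a) * qpow (2 * (a + d + 2 * c - 2 * m + 1)) * qpow (- 4 * m)
       * (qint d * (qpow (cexp (2 * m) a (c + 1) (d - 1)) * PB))
   + (qpow (- 1 - 3 * a) - qpow (- 1 - a) * qpow (2 - 4 * m + 4 * c)) / qdelta * (qpow (cexp (2 * m) (a + 1) c d) * PB)
   + qpow (- 1 - a) * qpow (- 2) / qdelta * ((qpow (4 * c) - 1) * (qpow (cexp (2 * m) (a + 1) (c - 1) d) * PA))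
   = qint (2 * m + 1) * (qpow (cexp (2 * m + 1) a c d) * PA)"
proof -
  define Q where "Q = qpow (cexp (2 * m + 1) a c d)"
  note e = qpow_cexp_even_shifts[where a = a and c = c and d = d and m = m, folded N_def Q_def]
  define A where "A = qint a * qpow (N + 1 + d + 2 * c)
     + qpow (- 2 * a) * qpow (2 * c + a + d) * qint (N + 1)
     + qpow (- 2 * a) * qpow (2 * (a + d + 2 * c - 2 * m - 1)) * qint d * qpow (N + 1 + a + 2 * c)
     + qpow (- 1 - a) * qpow (- 2) / qdelta * (qpow (4 * c) - 1) * qpow (- 2 * c + 2 - N - d)"
  define B where "B = - (qpow (- 2 * a) * qpow (2 * c + a + d) * (qpow (1 - 2 * N) * qint (N - 1)))
     - qpow (- 2 * a) * qpow (2 * (a + d + 2 * c - 2 * m + 1)) * qpow (- 4 * m) * qint d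
       * qpow (6 * c + 2 * a + 2 * d + N + a)
     + (qpow (- 1 - 3 * a) - qpow (- 1 - a) * qpow (2 - 4 * m + 4 * c)) / qdelta * qpow (2 * c + 2 * a + d - N + 1)"
  have A: "A = qint (2 * m + 1)"
    unfolding A_def N_def
    by ((simp add: qint_qpow field_simps)?; (simp add: qdelta_qpow qpow_split)?;
        (simp add: field_simps)?; algebra?)
  have B: "B = 0"
    unfolding B_def N_def
    by ((simp add: qint_qpow field_simps)?; (simp add: qdelta_qpow qpow_split)?;
        (simp add: field_simps)?; algebra?)
  show ?thesis
    unfolding e Q_def[symmetric]
    apply (rule trans[of _ "Q * PA * A + Q * PB * B"])
     apply (unfold A_def B_def divide_inverse; algebra)
    apply (unfold A B; algebra)
    done
qed

lemma odd_step_identity: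
  fixes a c d m :: int and PA PB :: qf
  defines "N \<equiv> 2 * m + 1 - a - d - 2 * c"
  shows "qint a * (qpow (cexp (2 * m + 1) (a - 1) c d) * PA)
   + qpow (- 2 * a) * qpow (cexp (2 * m + 1) a c d) * (qint (N + 1) * PA - qpow (1 - 2 * N) * qint (N - 1) * PB)
   + qpow (- 2 * a) * qpow (2 * (a + d + 2 * c - 2 * m - 2)) * (qint d * (qpow (cexp (2 * m + 1) a c (d - 1)) * PA))
   - qpow (- 2 * a) * qpow (2 * (a + d + 2 * c - 2 * m)) * qpow (- 4 * m)
       * (qint d * (qpow (cexp (2 * m + 1) a (c + 1) (d - 1)) * PB))
   + (qpow (- 1 - 3 * a) - qpow (- 1 - a) * qpow (2 - 4 * m + 4 * c)) / qdelta * (qpow (cexp (2 * m + 1) (a + 1) c d) * PB)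
   + qpow (- 1 - a) * qpow (- 2) / qdelta * ((qpow (4 * c) - 1) * (qpow (cexp (2 * m + 1) (a + 1) (c - 1) d) * PA))
   = qint (2 * m + 2) * (qpow (cexp (2 * (m + 1)) a c d) * PA - qpow (- 4 * m) * (qpow (cexp (2 * (m + 1)) a (c + 1) d) * PB))
   + qint (2 * m + 1) * (qpow (2 - 4 * m + 4 * c) * (qpow (cexp (2 * m) a c d) * PB)
       - qpow (- 2) * ((qpow (4 * c) - 1) * (qpow (cexp (2 * m) a (c - 1) d) * PA)))"
proof -
  define Q where "Q = qpow (cexp (2 * m + 1) a c d)"
  note e = qpow_cexp_odd_shifts[where a = a and c = c and d = d and m = m, folded N_def Q_def]
  define A where "A = qint a * qpow (N + 1 - a) + qpow (- 2 * a) * qint (N + 1)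
     + qpow (- 2 * a) * qpow (2 * (a + d + 2 * c - 2 * m - 2)) * qint d * qpow (N + 1 - d)
     + qpow (- 1 - a) * qpow (- 2) / qdelta * (qpow (4 * c) - 1) * qpow (- 4 * c + 4 - a - 2 * d - N)"
  define B where "B = - (qpow (- 2 * a) * qpow (1 - 2 * N) * qint (N - 1))
     - qpow (- 2 * a) * qpow (2 * (a + d + 2 * c - 2 * m)) * qpow (- 4 * m) * qint d * qpow (4 * c + 2 * a + d + N - 2)
     + (qpow (- 1 - 3 * a) - qpow (- 1 - a) * qpow (2 - 4 * m + 4 * c)) / qdelta * qpow (a - N + 1)"
  have A: "A = qint (2 * m + 2) * qpow (2 * c - a - d)
     - qint (2 * m + 1) * qpow (- 2) * (qpow (4 * c) - 1) * qpow (- 2 * c + 3 - a - d)"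
    unfolding A_def N_def
    by ((simp add: qint_qpow field_simps)?; (simp add: qdelta_qpow qpow_split)?;
        (simp add: field_simps)?; algebra?)
  have B: "B = - (qint (2 * m + 2) * qpow (- 4 * m) * qpow (6 * c + 1 + a + d))
     + qint (2 * m + 1) * qpow (2 - 4 * m + 4 * c) * qpow (2 * c + a + d)"
    unfolding B_def N_def
    by ((simp add: qint_qpow field_simps)?; (simp add: qdelta_qpow qpow_split)?;
        (simp add: field_simps)?; algebra?)
  show ?thesis
    unfolding e Q_def[symmetric]
    apply (rule trans[of _ "Q * PA * A + Q * PB * B"])
     apply (unfold A_def B_def divide_inverse; algebra)
    apply (unfold A B divide_inverse; algebra)
    done
qed

lemma shift_adjoint_t_tcoeff_even:
  assumes "0 \<le> a" "0 \<le> c" "0 \<le> d"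
  shows "shift_adjoint (t_shifts (- 2 * m) (1 - m) \<kappa>) (tcoeff (2 * m) \<kappa>) (a, c, d)
       = qint (2 * m + 1) * tcoeff (2 * m + 1) \<kappa> (a, c, d)"
proof -
  define N where "N = 2 * m - a - d - 2 * c"
  define P1 where "P1 = pdiv (N + 1) \<kappa>"
  define P0 where "P0 = pdiv N \<kappa>"
  define Pm where "Pm = pdiv (N - 1) \<kappa>"
  have P_rec: "\<kappa> * P0 = qint (N + 1) * P1 - qpow (1 - 2 * N) * qint (N - 1) * Pm"
    using pdiv_recurrence[of N \<kappa>] by (simp add: P0_def P1_def Pm_def)
  have rec: "\<kappa> * qpow (- 2 * a) * (qpow (cexp (2 * m) a c d) * P0)
      = qpow (- 2 * a) * qpow (cexp (2 * m) a c d) * (qint (N + 1) * P1 - qpow (1 - 2 * N) * qint (N - 1) * Pm)"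
    by (subst P_rec[symmetric]) (simp only: mult_ac)
  have at: "tcoeff_at (2 * m) \<kappa> (a - 1) c d = qpow (cexp (2 * m) (a - 1) c d) * P1"
    "tcoeff_at (2 * m) \<kappa> a c d = qpow (cexp (2 * m) a c d) * P0"
    "tcoeff_at (2 * m) \<kappa> a c (d - 1) = qpow (cexp (2 * m) a c (d - 1)) * P1"
    "tcoeff_at (2 * m) \<kappa> a (c + 1) (d - 1) = qpow (cexp (2 * m) a (c + 1) (d - 1)) * Pm"
    "tcoeff_at (2 * m) \<kappa> (a + 1) c d = qpow (cexp (2 * m) (a + 1) c d) * Pm"
    "tcoeff_at (2 * m) \<kappa> (a + 1) (c - 1) d = qpow (cexp (2 * m) (a + 1) (c - 1) d) * P1"
    "tcoeff_at (2 * m + 1) \<kappa> a c d = qpow (cexp (2 * m + 1) a c d) * P1"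
    by (simp_all add: tcoeff_at_def P0_def P1_def Pm_def N_def algebra_simps)
  have exps: "qpow (2 * (a + d + 2 * c + - 2 * m - 1)) = qpow (2 * (a + d + 2 * c - 2 * m - 1))"
    "qpow (2 * (a + d + 2 * c + - 2 * m + 1)) = qpow (2 * (a + d + 2 * c - 2 * m + 1))"
    "qpow (4 * (1 - m) - 4) = qpow (- 4 * m)" "qpow (4 * (1 - m) + 4 * c - 2) = qpow (2 - 4 * m + 4 * c)"
    by (simp_all add: algebra_simps)
  have "0 \<le> c + 1" "0 \<le> a + 1" using assms by simp_all
  with assms show ?thesis
    unfolding shift_adjoint_t_shifts
    by (simp only: tcoeff_guard_a tcoeff_guard_c tcoeff_guard_d tcoeff_nonneg at rec exps
        even_step_identity[where a = a and c = c and d = d and m = m and PA = P1 and PB = Pm, folded N_def])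
qed

lemma shift_adjoint_t_tcoeff_odd:
  assumes "0 \<le> a" "0 \<le> c" "0 \<le> d"
  shows "shift_adjoint (t_shifts (- 2 * m - 1) (1 - m) \<kappa>) (tcoeff (2 * m + 1) \<kappa>) (a, c, d) =
     qint (2 * m + 2) * shift_adjoint (hpred_shifts (1 - m)) (tcoeff (2 * (m + 1)) \<kappa>) (a, c, d)
   + qint (2 * m + 1) * shift_adjoint (K2_shifts (1 - m)) (tcoeff (2 * m) \<kappa>) (a, c, d)"
proof -
  define N where "N = 2 * m + 1 - a - d - 2 * c"
  define P1 where "P1 = pdiv (N + 1) \<kappa>"
  define P0 where "P0 = pdiv N \<kappa>"
  define Pm where "Pm = pdiv (N - 1) \<kappa>"
  have P_rec: "\<kappa> * P0 = qint (N + 1) * P1 - qpow (1 - 2 * N) * qint (N - 1) * Pm"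
    using pdiv_recurrence[of N \<kappa>] by (simp add: P0_def P1_def Pm_def)
  have rec: "\<kappa> * qpow (- 2 * a) * (qpow (cexp (2 * m + 1) a c d) * P0)
      = qpow (- 2 * a) * qpow (cexp (2 * m + 1) a c d) * (qint (N + 1) * P1 - qpow (1 - 2 * N) * qint (N - 1) * Pm)"
    by (subst P_rec[symmetric]) (simp only: mult_ac)
  have at: "tcoeff_at (2 * m + 1) \<kappa> (a - 1) c d = qpow (cexp (2 * m + 1) (a - 1) c d) * P1"
    "tcoeff_at (2 * m + 1) \<kappa> a c d = qpow (cexp (2 * m + 1) a c d) * P0"
    "tcoeff_at (2 * m + 1) \<kappa> a c (d - 1) = qpow (cexp (2 * m + 1) a c (d - 1)) * P1"
    "tcoeff_at (2 * m + 1) \<kappa> a (c + 1) (d - 1) = qpow (cexp (2 * m + 1) a (c + 1) (d - 1)) * Pm"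
    "tcoeff_at (2 * m + 1) \<kappa> (a + 1) c d = qpow (cexp (2 * m + 1) (a + 1) c d) * Pm"
    "tcoeff_at (2 * m + 1) \<kappa> (a + 1) (c - 1) d = qpow (cexp (2 * m + 1) (a + 1) (c - 1) d) * P1"
    "tcoeff_at (2 * (m + 1)) \<kappa> a c d = qpow (cexp (2 * (m + 1)) a c d) * P1"
    "tcoeff_at (2 * (m + 1)) \<kappa> a (c + 1) d = qpow (cexp (2 * (m + 1)) a (c + 1) d) * Pm"
    "tcoeff_at (2 * m) \<kappa> a c d = qpow (cexp (2 * m) a c d) * Pm"
    "tcoeff_at (2 * m) \<kappa> a (c - 1) d = qpow (cexp (2 * m) a (c - 1) d) * P1"
    by (simp_all add: tcoeff_at_def P0_def P1_def Pm_def N_def algebra_simps)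
  have exps: "qpow (2 * (a + d + 2 * c + (- 2 * m - 1) - 1)) = qpow (2 * (a + d + 2 * c - 2 * m - 2))"
    "qpow (2 * (a + d + 2 * c + (- 2 * m - 1) + 1)) = qpow (2 * (a + d + 2 * c - 2 * m))"
    "qpow (4 * (1 - m) - 4) = qpow (- 4 * m)" "qpow (4 * (1 - m) + 4 * c - 2) = qpow (2 - 4 * m + 4 * c)"
    by (simp_all add: algebra_simps)
  have "0 \<le> c + 1" "0 \<le> a + 1" using assms by simp_all
  with assms show ?thesis
    unfolding shift_adjoint_t_shifts shift_adjoint_hpred_shifts shift_adjoint_K2_shifts
    by (simp only: tcoeff_guard_a tcoeff_guard_c tcoeff_guard_d tcoeff_nonneg at rec exps
        odd_step_identity[where a = a and c = c and d = d and m = m and PA = P1 and PB = Pm, folded N_def])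
qed

section \<open>The divided powers of \<open>t\<close>\<close>

context Uq_rep
begin

lemma commute_tprod: "t * tprod phi t m = tprod phi t m * t"
proof -
  have "t * prod_list (map (\<lambda>j. t - phi (f j)) xs) = prod_list (map (\<lambda>j. t - phi (f j)) xs) * t"
    for f :: "int \<Rightarrow> qf" and xs
  proof (induction xs)
    case (Cons x xs)
    have "t * (t - phi (f x)) = (t - phi (f x)) * t"
      by (simp add: right_diff_distrib left_diff_distrib phi_commute)
    then show ?case by (simp add: mult.assoc[symmetric]) (simp add: mult.assoc Cons)
  qed simp
  then show ?thesis unfolding tprod_def .
qed

lemma tprod_Suc:
  "tprod phi t (Suc m) = (t + phi (qint (2 * int m + 1))) * tprod phi t m * (t - phi (qint (2 * int m + 1)))"
proof -
  have "[- int (Suc m) + 1 .. int (Suc m)] = - int m # [- int m + 1 .. int m] @ [int m + 1]"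
    using upto_rec1[of "- int m" "int m + 1"] upto_rec2[of "- int m + 1" "int m + 1"]
    by (simp add: add.commute)
  moreover have "qint (- (2 * int m) - 1) = - qint (2 * int m + 1)"
    using qint_uminus[of "2 * int m + 1"] by simp
  ultimately show ?thesis
    unfolding tprod_def by (simp add: phi_uminus mult.assoc add.commute)
qed

lemma t_tdot_even: "t * tdot_even phi t m = smul (qint (2 * int m + 1)) (tdot_odd phi t m)"
proof -
  have "qint (2 * int m + 1) * inverse (qfact (2 * m + 1)) = inverse (qfact (2 * m))"
    using qint_nonzero[of "2 * int m + 1"] qfact_Suc[of "2 * m"]
    by (simp add: field_simps add.commute)
  then show ?thesis
    by (simp add: tdot_even_def tdot_odd_def smul_def[symmetric])
qed

lemma t_tdot_odd:
  "t * tdot_odd phi t m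
     = smul (qint (2 * int m + 2)) (tdot_even phi t (Suc m)) + smul (qint (2 * int m + 1)) (tdot_even phi t m)"
proof -
  define P where "P = tprod phi t m"
  define s where "s = qint (2 * int m + 1)"
  define r where "r = qint (2 * int m + 2)"
  have "s \<noteq> 0" "r \<noteq> 0" by (simp_all add: s_def r_def qint_nonzero)
  have qfact_eqs: "qfact (2 * m + 1) = qfact (2 * m) * s" "qfact (2 * Suc m) = qfact (2 * m + 1) * r"
    using qfact_Suc[of "2 * m"] qfact_Suc[of "2 * m + 1"] by (simp_all add: s_def r_def algebra_simps)
  have "P * t = t * P" by (simp add: P_def commute_tprod)
  then have "tprod phi t (Suc m) = t * (t * P) - smul (s * s) P"
    by (simp add: tprod_Suc P_def[symmetric] s_def[symmetric] phi_eq_smul mult.assoc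
        distrib_left distrib_right right_diff_distrib left_diff_distrib smul_add smul_diff)
  then have "smul r (tdot_even phi t (Suc m))
      = smul (r * inverse (qfact (2 * Suc m))) (t * (t * P)) - smul (r * inverse (qfact (2 * Suc m)) * (s * s)) P"
    by (simp add: tdot_even_def smul_def[symmetric] smul_diff mult.assoc)
  also have "r * inverse (qfact (2 * Suc m)) = inverse (qfact (2 * m + 1))"
    using \<open>r \<noteq> 0\<close> unfolding qfact_eqs(2) by simp
  also have "inverse (qfact (2 * m + 1)) * (s * s) = s * inverse (qfact (2 * m))"
    using \<open>s \<noteq> 0\<close> unfolding qfact_eqs(1) by (simp add: field_simps)
  finally show ?thesis
    by (simp add: tdot_odd_def tdot_even_def smul_def[symmetric] P_def r_def s_def)
qed

definition tdot_expansion :: "nat \<Rightarrow> qf \<Rightarrow> 'a" where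
  "tdot_expansion n \<kappa> = pbw_sum (- int n) (1 - int (n div 2)) (tcoeff (int n) \<kappa>)"

lemma tdot_expansion_even:
  "tdot_expansion (2 * m) \<kappa> = pbw_sum (- 2 * int m) (1 - int m) (tcoeff (2 * int m) \<kappa>)"
proof -
  have "- int (2 * m) = - 2 * int m" "1 - int (2 * m div 2) = 1 - int m" "int (2 * m) = 2 * int m"
    by simp_all
  then show ?thesis unfolding tdot_expansion_def by (simp only:)
qed

lemma tdot_expansion_odd:
  "tdot_expansion (2 * m + 1) \<kappa> = pbw_sum (- 2 * int m - 1) (1 - int m) (tcoeff (2 * int m + 1) \<kappa>)"
proof -
  have "- int (2 * m + 1) = - 2 * int m - 1" "1 - int ((2 * m + 1) div 2) = 1 - int m"
    "int (2 * m + 1) = 2 * int m + 1"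
    by simp_all
  then show ?thesis unfolding tdot_expansion_def by (simp only:)
qed

lemma tdot_expansion_0: "tdot_expansion 0 \<kappa> = 1"
proof -
  have "tdot_expansion 0 \<kappa> = pbw_sum 0 1 (tcoeff 0 \<kappa>)"
    by (simp add: tdot_expansion_def)
  also have "\<dots> = (\<Sum>p\<in>{(0, 0, 0)}. smul (tcoeff 0 \<kappa> p) (pbw 0 1 p))"
    unfolding pbw_sum_def
    by (rule Sum_any.expand_superset)
      (auto simp: tcoeff_def tcoeff_at_def pdiv_def split: if_splits)
  finally show ?thesis
    by (simp add: tcoeff_def tcoeff_at_def cexp_def pdiv_def qfact_def pbw_def mon_def)
qed

lemma t_tdot_expansion_even:
  "(F + Ech + smul \<kappa> Ki) * tdot_expansion (2 * m) \<kappa> = smul (qint (2 * int m + 1)) (tdot_expansion (2 * m + 1) \<kappa>)"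
proof -
  have "(F + Ech + smul \<kappa> Ki) * tdot_expansion (2 * m) \<kappa>
      = pbw_sum (- 2 * int m - 1) (1 - int m) (shift_adjoint (t_shifts (- 2 * int m) (1 - int m) \<kappa>) (tcoeff (2 * int m) \<kappa>))"
    unfolding tdot_expansion_even by (rule t_pbw_sum[OF finite_support_tcoeff tcoeff_support])
  also have "\<dots> = pbw_sum (- 2 * int m - 1) (1 - int m) (\<lambda>p. qint (2 * int m + 1) * tcoeff (2 * int m + 1) \<kappa> p)"
    by (rule pbw_sum_cong_nat, rule shift_adjoint_t_tcoeff_even) simp_all
  also have "\<dots> = smul (qint (2 * int m + 1)) (tdot_expansion (2 * m + 1) \<kappa>)"
    unfolding tdot_expansion_odd by (rule smul_pbw_sum[OF finite_support_tcoeff, symmetric])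
  finally show ?thesis .
qed

lemma t_tdot_expansion_odd:
  "(F + Ech + smul \<kappa> Ki) * tdot_expansion (2 * m + 1) \<kappa>
     = smul (qint (2 * int m + 2)) (tdot_expansion (2 * Suc m) \<kappa>)
       + smul (qint (2 * int m + 1)) (tdot_expansion (2 * m) \<kappa>)"
proof -
  let ?k = "- 2 * int m - 1 - 1" and ?\<mu> = "1 - int m"
  let ?w1 = "shift_adjoint (hpred_shifts ?\<mu>) (tcoeff (2 * (int m + 1)) \<kappa>)"
  let ?w2 = "shift_adjoint (K2_shifts ?\<mu>) (tcoeff (2 * int m) \<kappa>)"
  have "(F + Ech + smul \<kappa> Ki) * tdot_expansion (2 * m + 1) \<kappa>
      = pbw_sum ?k ?\<mu> (shift_adjoint (t_shifts (- 2 * int m - 1) ?\<mu> \<kappa>) (tcoeff (2 * int m + 1) \<kappa>))"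
    unfolding tdot_expansion_odd by (rule t_pbw_sum[OF finite_support_tcoeff tcoeff_support])
  also have "\<dots> = pbw_sum ?k ?\<mu> (\<lambda>p. qint (2 * int m + 2) * ?w1 p + qint (2 * int m + 1) * ?w2 p)"
    by (rule pbw_sum_cong_nat, rule shift_adjoint_t_tcoeff_odd) simp_all
  also have "\<dots> = smul (qint (2 * int m + 2)) (pbw_sum ?k ?\<mu> ?w1) + smul (qint (2 * int m + 1)) (pbw_sum ?k ?\<mu> ?w2)"
    by (simp add: pbw_sum_add smul_pbw_sum finite_support_scale finite_support_shift_adjoint finite_support_tcoeff)
  also have "pbw_sum ?k ?\<mu> ?w1 = pbw_sum ?k (?\<mu> - 1) (tcoeff (2 * (int m + 1)) \<kappa>)"
    by (rule pbw_sum_hpred[OF finite_support_tcoeff tcoeff_support, symmetric])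
  also have "pbw_sum ?k ?\<mu> ?w2 = pbw_sum (?k + 2) ?\<mu> (tcoeff (2 * int m) \<kappa>)"
    by (rule pbw_sum_K2[OF finite_support_tcoeff tcoeff_support, symmetric])
  also have "pbw_sum ?k (?\<mu> - 1) (tcoeff (2 * (int m + 1)) \<kappa>) = tdot_expansion (2 * Suc m) \<kappa>"
  proof -
    have "?k = - 2 * int (Suc m)" "?\<mu> - 1 = 1 - int (Suc m)" "2 * (int m + 1) = 2 * int (Suc m)"
      by simp_all
    then show ?thesis by (simp only: tdot_expansion_even)
  qed
  also have "pbw_sum (?k + 2) ?\<mu> (tcoeff (2 * int m) \<kappa>) = tdot_expansion (2 * m) \<kappa>"
    by (simp add: tdot_expansion_even)
  finally show ?thesis .
qed

lemma tdot_odd_eq_expansion: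
  assumes "tdot_even phi (tel phi E F Ki \<kappa>) m = tdot_expansion (2 * m) \<kappa>"
  shows "tdot_odd phi (tel phi E F Ki \<kappa>) m = tdot_expansion (2 * m + 1) \<kappa>"
proof (rule smul_cancel)
  show "qint (2 * int m + 1) \<noteq> 0" by (simp add: qint_nonzero)
  have "smul (qint (2 * int m + 1)) (tdot_odd phi (tel phi E F Ki \<kappa>) m)
      = tel phi E F Ki \<kappa> * tdot_expansion (2 * m) \<kappa>"
    by (simp add: assms[symmetric] t_tdot_even)
  also have "\<dots> = smul (qint (2 * int m + 1)) (tdot_expansion (2 * m + 1) \<kappa>)"
    unfolding tel_eq t_tdot_expansion_even ..
  finally show "smul (qint (2 * int m + 1)) (tdot_odd phi (tel phi E F Ki \<kappa>) m)
      = smul (qint (2 * int m + 1)) (tdot_expansion (2 * m + 1) \<kappa>)" .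
qed

lemma tdot_even_eq_expansion: "tdot_even phi (tel phi E F Ki \<kappa>) m = tdot_expansion (2 * m) \<kappa>"
proof (induction m)
  case 0
  show ?case by (simp add: tdot_expansion_0 tdot_even_def tprod_def qfact_def)
next
  case (Suc m)
  let ?t = "tel phi E F Ki \<kappa>"
  show ?case
  proof (rule smul_cancel)
    show "qint (2 * int m + 2) \<noteq> 0" by (simp add: qint_nonzero)
    have "smul (qint (2 * int m + 2)) (tdot_even phi ?t (Suc m))
        = ?t * tdot_odd phi ?t m - smul (qint (2 * int m + 1)) (tdot_even phi ?t m)"
      by (simp add: t_tdot_odd)
    also have "\<dots> = ?t * tdot_expansion (2 * m + 1) \<kappa> - smul (qint (2 * int m + 1)) (tdot_expansion (2 * m) \<kappa>)"
      using Suc.IH tdot_odd_eq_expansion[OF Suc.IH] by simp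
    also have "\<dots> = smul (qint (2 * int m + 2)) (tdot_expansion (2 * Suc m) \<kappa>)"
      unfolding tel_eq t_tdot_expansion_odd by simp
    finally show "smul (qint (2 * int m + 2)) (tdot_even phi ?t (Suc m))
        = smul (qint (2 * int m + 2)) (tdot_expansion (2 * Suc m) \<kappa>)" .
  qed
qed

lemma tdot_expansion_nested_sum:
  assumes "n \<le> M"
  shows "tdot_expansion n \<kappa> = (\<Sum>b\<in>{0..n}. \<Sum>a\<in>{0..b}. \<Sum>c\<in>{0..M}.
    phi (qq powi cexp (int n) (int a) (int c) (int b - int a) * pdiv (int n - int b - 2 * int c) \<kappa>)
    * dE a * hb (1 - int (n div 2)) c * KP (int b + 2 * int c - int n) * dF (b - a))"
    (is "_ = (\<Sum>b\<in>_. \<Sum>a\<in>_. \<Sum>c\<in>_. ?g b a c)")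
proof -
  define f where "f = (\<lambda>p. smul (tcoeff (int n) \<kappa> p) (pbw (- int n) (1 - int (n div 2)) p))"
  define \<phi> :: "nat \<times> nat \<times> nat \<Rightarrow> idx" where "\<phi> = (\<lambda>(b, a, c). (int a, int c, int b - int a))"
  define I where "I = (SIGMA b:{0..n}. SIGMA a:{0..b}. {0..M})"
  have g_eq: "?g b a c = f (\<phi> (b, a, c))" if "a \<le> b" for a b c
  proof -
    have d: "int b - int a = int (b - a)" using that by simp
    have e: "int a + (int b - int a) + 2 * int c + - int n = int b + 2 * int c - int n"
      "int n - int a - (int b - int a) - 2 * int c = int n - int b - 2 * int c"
      "int (b - a) = int b - int a"
      using that by simp_all
    have "f (\<phi> (b, a, c)) = smul (tcoeff_at (int n) \<kappa> (int a) (int c) (int (b - a)))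
        (mon (1 - int (n div 2)) a c (int a + int (b - a) + 2 * int c + - int n) (b - a))"
      by (simp only: f_def \<phi>_def prod.case d tcoeff_nonneg of_nat_0_le_iff pbw_nat)
    also have "\<dots> = ?g b a c"
      by (simp only: e smul_def mon_def tcoeff_at_def qpow_def mult.assoc)
    finally show ?thesis ..
  qed
  have "inj_on \<phi> I" by (auto simp: inj_on_def \<phi>_def)
  have supp: "{p. f p \<noteq> 0} \<subseteq> \<phi> ` I"
  proof
    fix p assume "p \<in> {p. f p \<noteq> 0}"
    then have w: "tcoeff (int n) \<kappa> p \<noteq> 0" by (auto simp: f_def)
    obtain a c d where p: "p = (a, c, d)" by (cases p)
    with w have "0 \<le> a" "0 \<le> c" "0 \<le> d" "0 \<le> int n - a - d - 2 * c"
      by (auto simp: tcoeff_def tcoeff_at_def pdiv_def split: if_splits)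
    with assms have "p = \<phi> (nat (a + d), nat a, nat c)" "(nat (a + d), nat a, nat c) \<in> I"
      by (auto simp: p \<phi>_def I_def)
    then show "p \<in> \<phi> ` I" by blast
  qed
  have "tdot_expansion n \<kappa> = Sum_any f" by (simp add: tdot_expansion_def pbw_sum_def f_def)
  also have "\<dots> = sum f (\<phi> ` I)"
    by (rule Sum_any.expand_superset[OF _ supp]) (simp add: I_def)
  also have "\<dots> = sum (f \<circ> \<phi>) I" by (rule sum.reindex[OF \<open>inj_on \<phi> I\<close>])
  also have "\<dots> = sum (\<lambda>(b, a, c). ?g b a c) I"
    by (rule sum.cong) (auto simp: I_def g_eq)
  finally show ?thesis by (simp add: I_def sum.Sigma)
qed

end

lemma binomial_2c: "int (2 * c) * (int (2 * c) - 1) div 2 = int c * (2 * int c - 1)"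
proof -
  have "int (2 * c) * (int (2 * c) - 1) = 2 * (int c * (2 * int c - 1))" by (simp add: algebra_simps)
  then show ?thesis by simp
qed

theorem theorem3p3:
  fixes phi :: "qf \<Rightarrow> 'a::ring_1" and E F K Ki :: 'a and l :: int and m :: nat
  assumes "U_rep phi E F K Ki"
  shows "tdot_even phi (tel phi E F Ki (qint (2 * l))) m =
           (\<Sum>b\<in>{0..2*m}. \<Sum>a\<in>{0..b}. \<Sum>c\<in>{0..2*m+1}.
              phi (qq powi (int (2*c) * (int (2*c) - 1) div 2 - int b * (2 * int m - int b - 2 * int c)
                             - int a * (int b - int a))
                   * pdiv (2 * int m - int b - 2 * int c) (qint (2 * l)))
              * dpow phi (Echeck phi E Ki) a * hbin phi Ki (1 - int m) c
              * Kpow K Ki (int b - 2 * int m + 2 * int c) * dpow phi F (b - a))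
       \<and> tdot_odd phi (tel phi E F Ki (qint (2 * l))) m =
           (\<Sum>b\<in>{0..2*m+1}. \<Sum>a\<in>{0..b}. \<Sum>c\<in>{0..2*m+1}.
              phi (qq powi (int (2*c) * (int (2*c) - 1) div 2 - 2 * int c
                             - int b * (2 * int m - int b - 2 * int c + 1)
                             - int a * (int b - int a))
                   * pdiv (2 * int m - int b - 2 * int c + 1) (qint (2 * l)))
              * dpow phi (Echeck phi E Ki) a * hbin phi Ki (1 - int m) c
              * Kpow K Ki (int b - 2 * int m + 2 * int c - 1) * dpow phi F (b - a))"
proof -
  interpret Uq_rep phi E F K Ki by (rule Uq_rep.intro) (rule assms)
  have exp_even:
    "cexp (int (2 * m)) (int a) (int c) (int b - int a) = int (2*c) * (int (2*c) - 1) div 2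
       - int b * (2 * int m - int b - 2 * int c) - int a * (int b - int a)"
    "int (2 * m) - int b - 2 * int c = 2 * int m - int b - 2 * int c"
    "1 - int (2 * m div 2) = 1 - int m"
    "int b + 2 * int c - int (2 * m) = int b - 2 * int m + 2 * int c"
    for a b c by (simp_all add: cexp_def binomial_2c algebra_simps)
  have exp_odd:
    "cexp (int (2 * m + 1)) (int a) (int c) (int b - int a) = int (2*c) * (int (2*c) - 1) div 2 - 2 * int c
       - int b * (2 * int m - int b - 2 * int c + 1) - int a * (int b - int a)"
    "int (2 * m + 1) - int b - 2 * int c = 2 * int m - int b - 2 * int c + 1"
    "1 - int ((2 * m + 1) div 2) = 1 - int m"
    "int b + 2 * int c - int (2 * m + 1) = int b - 2 * int m + 2 * int c - 1"
    for a b c by (simp_all add: cexp_def binomial_2c algebra_simps)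
  show ?thesis
    using tdot_even_eq_expansion[of "qint (2 * l)" m] tdot_odd_eq_expansion[of "qint (2 * l)" m]
    unfolding tdot_expansion_nested_sum[of "2 * m" "2 * m + 1", OF le_add1]
      tdot_expansion_nested_sum[of "2 * m + 1" "2 * m + 1", OF le_refl]
    by (simp only: exp_even exp_odd)
qed

end
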